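(* Let $A$ be a commutative algebra with identity $1_A$ and $\lambda,\kappa\in\mathbf{k}$. Let $\text{Ш}_e(A)=\bigoplus_{n\geq 1}A^{\otimes n}$, let $\diamond$ be the product on $\text{Ш}_e(A)$ and $P_e$ the right-shift operator described below, and $j_A:A\to \text{Ш}_e(A)$ the natural embedding. (1) The triple $(\text{Ш}_e(A),\diamond,P_e)$ is a commutative extended Rota-Baxter algebra of weight $(\lambda,\kappa)$. (2) The quadruple $(\text{Ш}_e(A),\diamond,P_e,j_A)$ is the free commutative extended Rota-Baxter algebra of weight $(\lambda,\kappa)$ on $A$.
   Context: $\mathbf{k}$ is a commutative unitary ring; all algebras, linear maps and tensor products are over $\mathbf{k}$. An extended Rota-Baxter operator of weight $(\lambda,\kappa)$ on an algebra $R$ is a linear map $P:R\to R$ with $P(x)P(y)=P(xP(y))+P(P(x)y)+\lambda P(xy)+\kappa xy$ for all $x,y\in R$; the pair $(R,P)$ is an extended Rota-Baxter algebra, and homomorphisms are algebra homomorphisms commuting with the operators. A free commutative extended Rota-Baxter algebra of weight $(\lambda,\kappa)$ on a commutative algebra $A$ is a commutative extended Rota-Baxter algebra $F_e(A)$ with an algebra homomorphism $j_A:A\to F_e(A)$ such that for every commutative extended Rota-Baxter algebra $(R,P)$ of weight $(\lambda,\kappa)$ and every algebra homomorphism $f:A\to R$ there is a unique extended Rota-Baxter algebra homomorphism $\bar f:F_e(A)\to R$ with $f=\bar f\circ j_A$. Here $\text{Ш}_e(A)=\bigoplus_{n\geq1}A^{\otimes n}$, $P_e(\mathfrak{a})=1_A\otimes\mathfrak{a}$,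 $j_A(a)=a\in A=A^{\otimes 1}$, and for pure tensors $\mathfrak{a}=a_0\otimes\mathfrak{a}'\in A^{\otimes(m+1)}$, $\mathfrak{b}=b_0\otimes\mathfrak{b}'\in A^{\otimes(n+1)}$ ($m,n\ge0$) the product is defined recursively by: $\mathfrak{a}\diamond\mathfrak{b}=a_0b_0$ if $m=n=0$; $=a_0b_0\otimes\mathfrak{b}'$ if $m=0,n\ge1$; $=a_0b_0\otimes\mathfrak{a}'$ if $m\ge1,n=0$; and if $m,n\ge1$, $\mathfrak{a}\diamond\mathfrak{b}=a_0b_0\otimes\big(\mathfrak{a}'\diamond(1_A\otimes\mathfrak{b}')+(1_A\otimes\mathfrak{a}')\diamond\mathfrak{b}'+\lambda(\mathfrak{a}'\diamond\mathfrak{b}')\big)+\kappa\, a_0b_0(\mathfrak{a}'\diamond\mathfrak{b}')$, where $a_0b_0(\cdot)$ multiplies the first tensor factor by $a_0b_0$; extended bilinearly. *)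

theory Defs
  imports "HOL-Algebra.Module"
begin

text \<open>Elements of
  the direct sum of the tensor powers of A (n at least 1) are represented by formal
  K-linear combinations of words a_0 a_1 ... a_n (lists of elements of A, read as pure
  tensors a_0 (x) ... (x) a_n), i.e. lists of (coefficient, word) pairs, taken modulo
  the congruence that generates the free K-module on words and the multilinearity
  relations of the tensor product.\<close>

definition word_ok :: "('k,'a) module \<Rightarrow> 'a list \<Rightarrow> bool" where
  "word_ok A w \<longleftrightarrow> w \<noteq> [] \<and> set w \<subseteq> carrier A"

definition fsum_ok :: "'k ring \<Rightarrow> ('k,'a) module \<Rightarrow> ('k \<times> 'a list) list \<Rightarrow> bool" where
  "fsum_ok K A X \<longleftrightarrow> (\<forall>(c,w)\<in>set X. c \<in> carrier K \<and> word_ok A w)"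

definition fs_smult :: "'k ring \<Rightarrow> 'k \<Rightarrow> ('k \<times> 'a list) list \<Rightarrow> ('k \<times> 'a list) list" where
  "fs_smult K e X = map (\<lambda>(d,w). (e \<otimes>\<^bsub>K\<^esub> d, w)) X"

text \<open>The congruence defining the direct sum of tensor powers of A:
  X ~ Y iff X - Y lies in the submodule generated by the multilinearity relations
  (inside the free K-module on words).\<close>
inductive teq :: "'k ring \<Rightarrow> ('k,'a) module \<Rightarrow> ('k \<times> 'a list) list \<Rightarrow> ('k \<times> 'a list) list \<Rightarrow> bool"
  for K :: "'k ring" and A :: "('k,'a) module" where
  refl: "fsum_ok K A X \<Longrightarrow> teq K A X X"
| sym: "teq K A X Y \<Longrightarrow> teq K A Y X"
| trans: "teq K A X Y \<Longrightarrow> teq K A Y Z \<Longrightarrow> teq K A X Z"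
| app: "teq K A X X' \<Longrightarrow> fsum_ok K A Y \<Longrightarrow> teq K A (X @ Y) (X' @ Y)"
| comm: "fsum_ok K A X \<Longrightarrow> fsum_ok K A Y \<Longrightarrow> teq K A (X @ Y) (Y @ X)"
| scal: "teq K A X Y \<Longrightarrow> e \<in> carrier K \<Longrightarrow> teq K A (fs_smult K e X) (fs_smult K e Y)"
| coeff_add: "c \<in> carrier K \<Longrightarrow> d \<in> carrier K \<Longrightarrow> word_ok A w \<Longrightarrow>
      teq K A [(c,w),(d,w)] [(c \<oplus>\<^bsub>K\<^esub> d, w)]"
| coeff_zero: "word_ok A w \<Longrightarrow> teq K A [(\<zero>\<^bsub>K\<^esub>, w)] []"
| lin_add: "c \<in> carrier K \<Longrightarrow> set u \<subseteq> carrier A \<Longrightarrow> set v \<subseteq> carrier A \<Longrightarrow>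
      a \<in> carrier A \<Longrightarrow> b \<in> carrier A \<Longrightarrow>
      teq K A [(c, u @ (a \<oplus>\<^bsub>A\<^esub> b) # v)] [(c, u @ a # v), (c, u @ b # v)]"
| lin_smult: "c \<in> carrier K \<Longrightarrow> d \<in> carrier K \<Longrightarrow> set u \<subseteq> carrier A \<Longrightarrow>
      set v \<subseteq> carrier A \<Longrightarrow> a \<in> carrier A \<Longrightarrow>
      teq K A [(c, u @ (d \<odot>\<^bsub>A\<^esub> a) # v)] [(c \<otimes>\<^bsub>K\<^esub> d, u @ a # v)]"

definition tcls :: "'k ring \<Rightarrow> ('k,'a) module \<Rightarrow> ('k \<times> 'a list) list \<Rightarrow> ('k \<times> 'a list) list set" where
  "tcls K A X = {Y. teq K A X Y}"

definition trep :: "('k \<times> 'a list) list set \<Rightarrow> ('k \<times> 'a list) list" where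
  "trep S = (SOME X. X \<in> S)"

definition fs_pre :: "'a \<Rightarrow> ('k \<times> 'a list) list \<Rightarrow> ('k \<times> 'a list) list" where
  "fs_pre c X = map (\<lambda>(d,w). (d, c # w)) X"

definition fs_mulfirst :: "('k,'a) module \<Rightarrow> 'a \<Rightarrow> ('k \<times> 'a list) list \<Rightarrow> ('k \<times> 'a list) list" where
  "fs_mulfirst A c X = map (\<lambda>(d,w). (d, (c \<otimes>\<^bsub>A\<^esub> hd w) # tl w)) X"

fun dia :: "'k ring \<Rightarrow> ('k,'a) module \<Rightarrow> 'k \<Rightarrow> 'k \<Rightarrow> 'a list \<Rightarrow> 'a list \<Rightarrow> ('k \<times> 'a list) list" where
  "dia K A l k [] ys = []"
| "dia K A l k xs [] = []"
| "dia K A l k [a] [b] = [(\<one>\<^bsub>K\<^esub>, [a \<otimes>\<^bsub>A\<^esub> b])]"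
| "dia K A l k [a] (b # b1 # bs) = [(\<one>\<^bsub>K\<^esub>, (a \<otimes>\<^bsub>A\<^esub> b) # b1 # bs)]"
| "dia K A l k (a # a1 # as) [b] = [(\<one>\<^bsub>K\<^esub>, (a \<otimes>\<^bsub>A\<^esub> b) # a1 # as)]"
| "dia K A l k (a # a1 # as) (b # b1 # bs) =
     fs_pre (a \<otimes>\<^bsub>A\<^esub> b)
       (dia K A l k (a1 # as) (\<one>\<^bsub>A\<^esub> # b1 # bs)
        @ dia K A l k (\<one>\<^bsub>A\<^esub> # a1 # as) (b1 # bs)
        @ fs_smult K l (dia K A l k (a1 # as) (b1 # bs)))
     @ fs_smult K k (fs_mulfirst A (a \<otimes>\<^bsub>A\<^esub> b) (dia K A l k (a1 # as) (b1 # bs)))"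

definition fs_mult :: "'k ring \<Rightarrow> ('k,'a) module \<Rightarrow> 'k \<Rightarrow> 'k \<Rightarrow>
    ('k \<times> 'a list) list \<Rightarrow> ('k \<times> 'a list) list \<Rightarrow> ('k \<times> 'a list) list" where
  "fs_mult K A l k X Y =
     concat (map (\<lambda>(c,v). concat (map (\<lambda>(d,w). fs_smult K (c \<otimes>\<^bsub>K\<^esub> d) (dia K A l k v w)) Y)) X)"

definition Sha_e :: "'k ring \<Rightarrow> ('k,'a) module \<Rightarrow> 'k \<Rightarrow> 'k \<Rightarrow> ('k, ('k \<times> 'a list) list set) module" where
  "Sha_e K A l k =
    \<lparr> carrier = tcls K A ` {X. fsum_ok K A X},
      mult = (\<lambda>S T. tcls K A (fs_mult K A l k (trep S) (trep T))),
      one = tcls K A [(\<one>\<^bsub>K\<^esub>, [\<one>\<^bsub>A\<^esub>])],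
      zero = tcls K A [],
      add = (\<lambda>S T. tcls K A (trep S @ trep T)),
      smult = (\<lambda>c S. tcls K A (fs_smult K c (trep S))) \<rparr>"

definition P_e :: "'k ring \<Rightarrow> ('k,'a) module \<Rightarrow> ('k \<times> 'a list) list set \<Rightarrow> ('k \<times> 'a list) list set" where
  "P_e K A S = tcls K A (fs_pre \<one>\<^bsub>A\<^esub> (trep S))"

definition j_A :: "'k ring \<Rightarrow> ('k,'a) module \<Rightarrow> 'a \<Rightarrow> ('k \<times> 'a list) list set" where
  "j_A K A a = tcls K A [(\<one>\<^bsub>K\<^esub>, [a])]"

definition ext_RB_operator :: "'k ring \<Rightarrow> ('k,'r) module \<Rightarrow> 'k \<Rightarrow> 'k \<Rightarrow> ('r \<Rightarrow> 'r) \<Rightarrow> bool" where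
  "ext_RB_operator K R l k P \<longleftrightarrow>
     P \<in> carrier R \<rightarrow> carrier R \<and>
     (\<forall>x\<in>carrier R. \<forall>y\<in>carrier R. P (x \<oplus>\<^bsub>R\<^esub> y) = P x \<oplus>\<^bsub>R\<^esub> P y) \<and>
     (\<forall>c\<in>carrier K. \<forall>x\<in>carrier R. P (c \<odot>\<^bsub>R\<^esub> x) = c \<odot>\<^bsub>R\<^esub> P x) \<and>
     (\<forall>x\<in>carrier R. \<forall>y\<in>carrier R.
        P x \<otimes>\<^bsub>R\<^esub> P y =
          P (x \<otimes>\<^bsub>R\<^esub> P y) \<oplus>\<^bsub>R\<^esub> P (P x \<otimes>\<^bsub>R\<^esub> y)
          \<oplus>\<^bsub>R\<^esub> l \<odot>\<^bsub>R\<^esub> P (x \<otimes>\<^bsub>R\<^esub> y) \<oplus>\<^bsub>R\<^esub> k \<odot>\<^bsub>R\<^esub> (x \<otimes>\<^bsub>R\<^esub> y))"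

definition comm_ext_RB_algebra :: "'k ring \<Rightarrow> ('k,'r) module \<Rightarrow> 'k \<Rightarrow> 'k \<Rightarrow> ('r \<Rightarrow> 'r) \<Rightarrow> bool" where
  "comm_ext_RB_algebra K R l k P \<longleftrightarrow> algebra K R \<and> ext_RB_operator K R l k P"

definition alg_hom :: "'k ring \<Rightarrow> ('k,'a) module \<Rightarrow> ('k,'b) module \<Rightarrow> ('a \<Rightarrow> 'b) set" where
  "alg_hom K A B = {f \<in> ring_hom A B. \<forall>c\<in>carrier K. \<forall>x\<in>carrier A. f (c \<odot>\<^bsub>A\<^esub> x) = c \<odot>\<^bsub>B\<^esub> f x}"

definition ext_RB_hom :: "'k ring \<Rightarrow> ('k,'a) module \<Rightarrow> ('a \<Rightarrow> 'a) \<Rightarrow> ('k,'b) module \<Rightarrow> ('b \<Rightarrow> 'b) \<Rightarrow> ('a \<Rightarrow> 'b) set" where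
  "ext_RB_hom K R P S Q = {f \<in> alg_hom K R S. \<forall>x\<in>carrier R. f (P x) = Q (f x)}"

end

theory Submission
  imports Defs "HOL-Library.Multiset"
begin

text \<open>Every operation used to build \<open>\<Sha>\<^sub>e(A)\<close> -- prepending a letter, multiplying the first
  letter, scaling, and the product \<open>\<diamond>\<close> of words -- respects the tensor relations; for \<open>\<diamond>\<close> this is
  multilinearity in each letter, proved along the recursion of \<open>\<diamond>\<close>, together with commutativity.
  Since a word \<open>a\<^sub>0 a\<^sub>1 \<dots> a\<^sub>n\<close> equals \<open>j\<^sub>A(a\<^sub>0) \<diamond> P\<^sub>e(a\<^sub>1 \<dots> a\<^sub>n)\<close> and multiplication by \<open>j\<^sub>A(a)\<close>
  commutes with everything, associativity reduces, by induction on the total length, to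
  associativity of products of three \<open>P\<^sub>e\<close>-images, which follows from the Rota-Baxter identity
  and associativity of shorter products; the Rota-Baxter identity itself is the recursive
  clause of \<open>\<diamond>\<close> for words with first letter \<open>1\<^sub>A\<close>.
  For the universal property, a word \<open>a\<^sub>0 a\<^sub>1 \<dots> a\<^sub>n\<close> must be sent to
  \<open>f(a\<^sub>0) P(f(a\<^sub>1) P(\<dots> P(f(a\<^sub>n))))\<close>; this is multilinear, hence defined on \<open>\<Sha>\<^sub>e(A)\<close>, and
  multiplicative by induction along the recursion of \<open>\<diamond>\<close>, using the Rota-Baxter identity of \<open>P\<close>.\<close>

lemma mset_concat_map_append:
  "mset (concat (map (\<lambda>x. f x @ g x) xs)) = mset (concat (map f xs)) + mset (concat (map g xs))"
  by (induction xs) (auto simp: ac_simps)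

lemma mset_concat_map_swap:
  "mset (concat (map (\<lambda>x. concat (map (F x) ys)) xs)) =
   mset (concat (map (\<lambda>y. concat (map (\<lambda>x. F x y) xs)) ys))"
proof (induction xs)
  case Nil
  show ?case by (induction ys) auto
next
  case (Cons x xs)
  have "mset (concat (map (\<lambda>y. concat (map (\<lambda>x. F x y) (x # xs))) ys)) =
        mset (concat (map (F x) ys)) + mset (concat (map (\<lambda>y. concat (map (\<lambda>x. F x y) xs)) ys))"
    using mset_concat_map_append[of "F x" _ ys] by simp
  with Cons show ?case by simp
qed

lemma (in algebra) smult_assoc2_right:
  "a \<in> carrier R \<Longrightarrow> x \<in> carrier M \<Longrightarrow> y \<in> carrier M \<Longrightarrow> x \<otimes>\<^bsub>M\<^esub> (a \<odot>\<^bsub>M\<^esub> y) = a \<odot>\<^bsub>M\<^esub> (x \<otimes>\<^bsub>M\<^esub> y)"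
  by (metis m_comm smult_assoc2 smult_closed)

section \<open>Formal sums modulo the tensor relations\<close>

locale tensor_sums = algebra K A for K :: "'k ring" and A :: "('k,'a) module"
begin

abbreviation is_fsum :: "('k \<times> 'a list) list \<Rightarrow> bool" where
  "is_fsum X \<equiv> fsum_ok K A X"

abbreviation tensor_equiv :: "('k \<times> 'a list) list \<Rightarrow> ('k \<times> 'a list) list \<Rightarrow> bool"
    (infix \<open>\<approx>\<close> 50) where
  "X \<approx> Y \<equiv> teq K A X Y"

lemma word_ok_Cons [simp]: "word_ok A (a # w) \<longleftrightarrow> a \<in> carrier A \<and> set w \<subseteq> carrier A"
  by (simp add: word_ok_def)

lemma word_okE:
  assumes "word_ok A w"
  obtains a w' where "w = a # w'" "a \<in> carrier A" "set w' \<subseteq> carrier A"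
  using assms by (cases w) (auto simp: word_ok_def)

lemma is_fsum_Nil [simp]: "is_fsum []"
  by (simp add: fsum_ok_def)

lemma is_fsum_append [simp]: "is_fsum (X @ Y) \<longleftrightarrow> is_fsum X \<and> is_fsum Y"
  by (auto simp: fsum_ok_def)

lemma is_fsum_Cons [simp]: "is_fsum ((c,w) # X) \<longleftrightarrow> c \<in> carrier K \<and> word_ok A w \<and> is_fsum X"
  by (auto simp: fsum_ok_def)

lemma is_fsum_concat [simp]: "is_fsum (concat Xs) \<longleftrightarrow> (\<forall>X\<in>set Xs. is_fsum X)"
  by (auto simp: fsum_ok_def)

lemma is_fsumD: "is_fsum X \<Longrightarrow> (c,w) \<in> set X \<Longrightarrow> c \<in> carrier K \<and> word_ok A w"
  by (auto simp: fsum_ok_def)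

lemma teq_is_fsum: "X \<approx> Y \<Longrightarrow> is_fsum X \<and> is_fsum Y"
proof (induction rule: teq.induct)
  case (scal X Y e)
  then show ?case by (auto simp: fsum_ok_def fs_smult_def)
qed (auto simp: fsum_ok_def word_ok_def)

declare teq.trans [trans]

text \<open>Without these, calculations mixing \<open>=\<close> and \<open>\<approx>\<close> fall back on the generic substitution
  rules, whose higher-order unification is prohibitively slow here.\<close>

lemma eq_teq_trans [trans]: "X = Y \<Longrightarrow> Y \<approx> Z \<Longrightarrow> X \<approx> Z"
  by simp

lemma teq_eq_trans [trans]: "X \<approx> Y \<Longrightarrow> Y = Z \<Longrightarrow> X \<approx> Z"
  by simp

lemma teq_append: "X \<approx> X' \<Longrightarrow> Y \<approx> Y' \<Longrightarrow> X @ Y \<approx> X' @ Y'"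
proof -
  assume XY: "X \<approx> X'" "Y \<approx> Y'"
  have "X @ Y \<approx> X' @ Y" using XY teq.app teq_is_fsum by blast
  also have "\<dots> \<approx> Y @ X'" using XY teq.comm teq_is_fsum by blast
  also have "\<dots> \<approx> Y' @ X'" using XY teq.app teq_is_fsum by blast
  also have "\<dots> \<approx> X' @ Y'" using XY teq.comm teq_is_fsum by blast
  finally show ?thesis .
qed

lemma teq_perm: "mset X = mset Y \<Longrightarrow> is_fsum X \<Longrightarrow> X \<approx> Y"
proof (induction X arbitrary: Y)
  case Nil
  then show ?case by (simp add: teq.refl)
next
  case (Cons x X)
  then have "x \<in> set Y" by (metis list.set_intros(1) set_mset_mset)
  then obtain Y1 Y2 where Y: "Y = Y1 @ x # Y2" by (meson split_list)
  have x: "is_fsum [x]" and "is_fsum X" using Cons.prems(2) by (auto simp: fsum_ok_def)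
  then have X: "X \<approx> Y1 @ Y2" using Cons Y by simp
  have Y12: "is_fsum Y1" "is_fsum Y2" using teq_is_fsum[OF X] by auto
  have "[x] @ X \<approx> ([x] @ Y1) @ Y2" using teq_append[OF teq.refl[OF x] X] by simp
  also have "\<dots> \<approx> (Y1 @ [x]) @ Y2" using teq.comm x Y12 by (blast intro: teq_append teq.refl)
  finally show ?case using Y by simp
qed

lemma teq_concat_map:
  "(\<And>x. x \<in> set xs \<Longrightarrow> f x \<approx> g x) \<Longrightarrow> concat (map f xs) \<approx> concat (map g xs)"
  by (induction xs) (auto intro: teq_append teq.refl)

lemma fs_smult_Nil [simp]: "fs_smult K e [] = []"
  by (simp add: fs_smult_def)

lemma fs_smult_Cons [simp]: "fs_smult K e ((c,w) # X) = (e \<otimes>\<^bsub>K\<^esub> c, w) # fs_smult K e X"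
  by (simp add: fs_smult_def)

lemma fs_smult_append [simp]: "fs_smult K e (X @ Y) = fs_smult K e X @ fs_smult K e Y"
  by (simp add: fs_smult_def)

lemma is_fsum_fs_smult [simp]: "e \<in> carrier K \<Longrightarrow> is_fsum X \<Longrightarrow> is_fsum (fs_smult K e X)"
  by (auto simp: fsum_ok_def fs_smult_def)

lemma fs_smult_fs_smult:
  "e \<in> carrier K \<Longrightarrow> e' \<in> carrier K \<Longrightarrow> is_fsum X \<Longrightarrow>
   fs_smult K e (fs_smult K e' X) = fs_smult K (e \<otimes>\<^bsub>K\<^esub> e') X"
  by (induction X) (auto simp: R.m_assoc)

lemma fs_smult_one: "is_fsum X \<Longrightarrow> fs_smult K \<one>\<^bsub>K\<^esub> X = X"
  by (induction X) auto

lemma fs_smult_add_teq: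
  "e \<in> carrier K \<Longrightarrow> e' \<in> carrier K \<Longrightarrow> is_fsum X \<Longrightarrow>
   fs_smult K (e \<oplus>\<^bsub>K\<^esub> e') X \<approx> fs_smult K e X @ fs_smult K e' X"
proof (induction X)
  case Nil
  then show ?case by (simp add: teq.refl)
next
  case (Cons x X)
  obtain c w where x: "x = (c,w)" by force
  with Cons.prems have cw: "c \<in> carrier K" "word_ok A w" and X: "is_fsum X" by auto
  have "[((e \<oplus>\<^bsub>K\<^esub> e') \<otimes>\<^bsub>K\<^esub> c, w)] \<approx> [(e \<otimes>\<^bsub>K\<^esub> c, w), (e' \<otimes>\<^bsub>K\<^esub> c, w)]"
    using teq.sym[OF teq.coeff_add[of "e \<otimes>\<^bsub>K\<^esub> c" K "e' \<otimes>\<^bsub>K\<^esub> c" A w]] Cons.prems cw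
    by (auto simp: R.l_distr)
  then have "[((e \<oplus>\<^bsub>K\<^esub> e') \<otimes>\<^bsub>K\<^esub> c, w)] @ fs_smult K (e \<oplus>\<^bsub>K\<^esub> e') X \<approx>
      [(e \<otimes>\<^bsub>K\<^esub> c, w), (e' \<otimes>\<^bsub>K\<^esub> c, w)] @ (fs_smult K e X @ fs_smult K e' X)"
    using teq_append Cons X by blast
  also have "\<dots> \<approx> ((e \<otimes>\<^bsub>K\<^esub> c, w) # fs_smult K e X) @ ((e' \<otimes>\<^bsub>K\<^esub> c, w) # fs_smult K e' X)"
    by (rule teq_perm) (use Cons.prems cw X in auto)
  finally show ?case using x by simp
qed

lemma fs_smult_zero_teq: "is_fsum X \<Longrightarrow> fs_smult K \<zero>\<^bsub>K\<^esub> X \<approx> []"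
proof (induction X)
  case Nil
  then show ?case by (simp add: teq.refl)
next
  case (Cons x X)
  obtain c w where x: "x = (c,w)" by force
  with Cons.prems have "word_ok A w" "is_fsum X" by auto
  then have "[(\<zero>\<^bsub>K\<^esub>, w)] @ fs_smult K \<zero>\<^bsub>K\<^esub> X \<approx> [] @ []"
    using teq_append teq.coeff_zero Cons.IH by blast
  then show ?case using x Cons.prems by simp
qed

lemma fs_append_neg_teq: "is_fsum X \<Longrightarrow> X @ fs_smult K (\<ominus>\<^bsub>K\<^esub> \<one>\<^bsub>K\<^esub>) X \<approx> []"
proof -
  assume X: "is_fsum X"
  have "X @ fs_smult K (\<ominus>\<^bsub>K\<^esub> \<one>\<^bsub>K\<^esub>) X = fs_smult K \<one>\<^bsub>K\<^esub> X @ fs_smult K (\<ominus>\<^bsub>K\<^esub> \<one>\<^bsub>K\<^esub>) X"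
    using fs_smult_one X by simp
  also have "\<dots> \<approx> fs_smult K (\<one>\<^bsub>K\<^esub> \<oplus>\<^bsub>K\<^esub> \<ominus>\<^bsub>K\<^esub> \<one>\<^bsub>K\<^esub>) X"
    by (rule teq.sym, rule fs_smult_add_teq) (use X in auto)
  also have "\<dots> = fs_smult K \<zero>\<^bsub>K\<^esub> X" by (simp add: R.r_neg)
  also have "\<dots> \<approx> []" using fs_smult_zero_teq X .
  finally show ?thesis .
qed

lemma fs_pre_Nil [simp]: "fs_pre c [] = []"
  by (simp add: fs_pre_def)

lemma fs_pre_Cons [simp]: "fs_pre c ((d,w) # X) = (d, c # w) # fs_pre c X"
  by (simp add: fs_pre_def)

lemma fs_pre_append [simp]: "fs_pre c (X @ Y) = fs_pre c X @ fs_pre c Y"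
  by (simp add: fs_pre_def)

lemma fs_pre_fs_smult: "fs_pre c (fs_smult K e X) = fs_smult K e (fs_pre c X)"
  by (induction X) auto

lemma is_fsum_fs_pre [simp]: "c \<in> carrier A \<Longrightarrow> is_fsum X \<Longrightarrow> is_fsum (fs_pre c X)"
  by (induction X) (auto simp: word_ok_def)

lemma fs_pre_teq: "X \<approx> Y \<Longrightarrow> c \<in> carrier A \<Longrightarrow> fs_pre c X \<approx> fs_pre c Y"
proof (induction rule: teq.induct)
  case (trans X Y Z)
  then show ?case by (meson teq.trans)
next
  case (scal X Y e)
  then show ?case by (simp add: fs_pre_fs_smult teq.scal)
next
  case (coeff_add c' d w)
  then show ?case using teq.coeff_add[of c' K d A "c # w"] by (simp add: word_ok_def)
next
  case (coeff_zero w)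
  then show ?case using teq.coeff_zero[of A "c # w" K] by (simp add: word_ok_def)
next
  case (lin_add d u v a b)
  then show ?case using teq.lin_add[of d K "c # u" A v a b] by simp
next
  case (lin_smult d e u v a)
  then show ?case using teq.lin_smult[of d K e "c # u" A v a] by simp
qed (simp_all add: teq.refl teq.sym teq_append teq.comm)

lemma fs_mulfirst_Nil [simp]: "fs_mulfirst A c [] = []"
  by (simp add: fs_mulfirst_def)

lemma fs_mulfirst_Cons [simp]:
  "fs_mulfirst A c ((d, a # w) # X) = (d, (c \<otimes>\<^bsub>A\<^esub> a) # w) # fs_mulfirst A c X"
  by (simp add: fs_mulfirst_def)

lemma fs_mulfirst_append [simp]:
  "fs_mulfirst A c (X @ Y) = fs_mulfirst A c X @ fs_mulfirst A c Y"
  by (simp add: fs_mulfirst_def)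

lemma fs_mulfirst_fs_smult: "fs_mulfirst A c (fs_smult K e X) = fs_smult K e (fs_mulfirst A c X)"
  by (simp add: fs_mulfirst_def fs_smult_def split_def)

lemma fs_mulfirst_fs_pre: "fs_mulfirst A a (fs_pre c X) = fs_pre (a \<otimes>\<^bsub>A\<^esub> c) X"
  by (induction X) auto

lemma fsum_induct [consumes 1, case_names Nil Cons]:
  assumes "is_fsum X" and "Q []"
    and "\<And>d a w X. d \<in> carrier K \<Longrightarrow> a \<in> carrier A \<Longrightarrow> set w \<subseteq> carrier A \<Longrightarrow> is_fsum X \<Longrightarrow>
           Q X \<Longrightarrow> Q ((d, a # w) # X)"
  shows "Q X"
  using assms(1)
proof (induction X)
  case (Cons x X)
  obtain d v where x: "x = (d,v)" by force
  with Cons.prems obtain a w where "v = a # w" "a \<in> carrier A" "set w \<subseteq> carrier A"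
    by (auto elim: word_okE)
  with Cons x assms(3) show ?case by auto
qed (rule assms(2))

lemma is_fsum_fs_mulfirst [simp]:
  assumes "is_fsum X" and "c \<in> carrier A" shows "is_fsum (fs_mulfirst A c X)"
  using assms by (induction X rule: fsum_induct) auto

lemma fs_mulfirst_fs_mulfirst:
  assumes "is_fsum X" and "a \<in> carrier A" and "b \<in> carrier A"
  shows "fs_mulfirst A a (fs_mulfirst A b X) = fs_mulfirst A (a \<otimes>\<^bsub>A\<^esub> b) X"
  using assms by (induction X rule: fsum_induct) (auto simp: m_assoc)

lemma fs_mulfirst_one:
  assumes "is_fsum X" shows "fs_mulfirst A \<one>\<^bsub>A\<^esub> X = X"
  using assms by (induction X rule: fsum_induct) auto

lemma fs_mulfirst_teq: "X \<approx> Y \<Longrightarrow> c \<in> carrier A \<Longrightarrow> fs_mulfirst A c X \<approx> fs_mulfirst A c Y"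
proof (induction rule: teq.induct)
  case (trans X Y Z)
  then show ?case by (meson teq.trans)
next
  case (scal X Y e)
  then show ?case by (simp add: fs_mulfirst_fs_smult teq.scal)
next
  case (coeff_add c' d w)
  then show ?case using teq.coeff_add[of c' K d A "(c \<otimes>\<^bsub>A\<^esub> hd w) # tl w"]
    by (auto simp: fs_mulfirst_def elim: word_okE)
next
  case (coeff_zero w)
  then show ?case using teq.coeff_zero[of A "(c \<otimes>\<^bsub>A\<^esub> hd w) # tl w" K]
    by (auto simp: fs_mulfirst_def elim: word_okE)
next
  case (lin_add d u v a b)
  then show ?case
    using teq.lin_add[of d K "[]" A v "c \<otimes>\<^bsub>A\<^esub> a" "c \<otimes>\<^bsub>A\<^esub> b"]
      teq.lin_add[of d K "(c \<otimes>\<^bsub>A\<^esub> hd u) # tl u" A v a b]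
    by (cases u) (simp_all add: fs_mulfirst_def r_distr)
next
  case (lin_smult d e u v a)
  then show ?case
    using teq.lin_smult[of d K e "[]" A v "c \<otimes>\<^bsub>A\<^esub> a"]
      teq.lin_smult[of d K e "(c \<otimes>\<^bsub>A\<^esub> hd u) # tl u" A v a]
    by (cases u) (simp_all add: fs_mulfirst_def smult_assoc2_right)
qed (simp_all add: teq.refl teq.sym teq_append teq.comm)

lemma fs_mulfirst_add_teq:
  assumes "is_fsum X" and "a \<in> carrier A" and "b \<in> carrier A"
  shows "fs_mulfirst A (a \<oplus>\<^bsub>A\<^esub> b) X \<approx> fs_mulfirst A a X @ fs_mulfirst A b X"
  using assms
proof (induction X rule: fsum_induct)
  case Nil
  then show ?case by (simp add: teq.refl)
next
  case (Cons d w0 w X)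
  have "[(d, ((a \<oplus>\<^bsub>A\<^esub> b) \<otimes>\<^bsub>A\<^esub> w0) # w)] \<approx> [(d, (a \<otimes>\<^bsub>A\<^esub> w0) # w), (d, (b \<otimes>\<^bsub>A\<^esub> w0) # w)]"
    using teq.lin_add[of d K "[]" A w "a \<otimes>\<^bsub>A\<^esub> w0" "b \<otimes>\<^bsub>A\<^esub> w0"] Cons by (auto simp: l_distr)
  then have "[(d, ((a \<oplus>\<^bsub>A\<^esub> b) \<otimes>\<^bsub>A\<^esub> w0) # w)] @ fs_mulfirst A (a \<oplus>\<^bsub>A\<^esub> b) X \<approx>
      [(d, (a \<otimes>\<^bsub>A\<^esub> w0) # w), (d, (b \<otimes>\<^bsub>A\<^esub> w0) # w)] @ (fs_mulfirst A a X @ fs_mulfirst A b X)"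
    using teq_append Cons by blast
  also have "\<dots> \<approx> ((d, (a \<otimes>\<^bsub>A\<^esub> w0) # w) # fs_mulfirst A a X) @
                  ((d, (b \<otimes>\<^bsub>A\<^esub> w0) # w) # fs_mulfirst A b X)"
    by (rule teq_perm) (use Cons in auto)
  finally show ?case by simp
qed

lemma fs_mulfirst_smult_teq:
  assumes "is_fsum X" and "e \<in> carrier K" and "a \<in> carrier A"
  shows "fs_mulfirst A (e \<odot>\<^bsub>A\<^esub> a) X \<approx> fs_smult K e (fs_mulfirst A a X)"
  using assms
proof (induction X rule: fsum_induct)
  case Nil
  then show ?case by (simp add: teq.refl)
next
  case (Cons d w0 w X)
  have "[(d, ((e \<odot>\<^bsub>A\<^esub> a) \<otimes>\<^bsub>A\<^esub> w0) # w)] \<approx> [(e \<otimes>\<^bsub>K\<^esub> d, (a \<otimes>\<^bsub>A\<^esub> w0) # w)]"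
    using teq.lin_smult[of d K e "[]" A w "a \<otimes>\<^bsub>A\<^esub> w0"] Cons
    by (auto simp: smult_assoc2 R.m_comm)
  with Cons show ?case using teq_append[of "[_]" "[_]"] by simp
qed

end

section \<open>The product of words\<close>

locale ext_shuffle = tensor_sums K A for K :: "'k ring" and A :: "('k,'a) module" +
  fixes l k :: 'k
  assumes l_closed: "l \<in> carrier K" and k_closed: "k \<in> carrier K"
begin

abbreviation dia_word :: "'a list \<Rightarrow> 'a list \<Rightarrow> ('k \<times> 'a list) list" (infixl \<open>\<diamond>\<close> 70) where
  "v \<diamond> w \<equiv> dia K A l k v w"

lemma dia_induct [case_names Nil_left Nil_right single single_left single_right Cons_Cons]:
  assumes "\<And>ys. Q [] ys" "\<And>v vs. Q (v # vs) []" "\<And>a b. Q [a] [b]"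
    "\<And>a b b1 bs. Q [a] (b # b1 # bs)" "\<And>a a1 as b. Q (a # a1 # as) [b]"
    "\<And>a a1 as b b1 bs. Q (a1 # as) (\<one>\<^bsub>A\<^esub> # b1 # bs) \<Longrightarrow> Q (\<one>\<^bsub>A\<^esub> # a1 # as) (b1 # bs) \<Longrightarrow>
        Q (a1 # as) (b1 # bs) \<Longrightarrow> Q (a # a1 # as) (b # b1 # bs)"
  shows "Q v w"
proof -
  \<comment> \<open>\<open>dia.induct\<close> also quantifies over the algebra; the guard keeps it equal to \<open>A\<close>\<close>
  have "A = A \<longrightarrow> Q v w"
    by (rule dia.induct[of "\<lambda>K' A' l' k' v w. A' = A \<longrightarrow> Q v w" K A l k v w]) (use assms in auto)
  then show ?thesis by simp
qed

definition dia_step ::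
    "'a \<Rightarrow> ('k \<times> 'a list) list \<Rightarrow> ('k \<times> 'a list) list \<Rightarrow> ('k \<times> 'a list) list \<Rightarrow> ('k \<times> 'a list) list"
  where "dia_step c X Y Z = fs_pre c (X @ Y @ fs_smult K l Z) @ fs_smult K k (fs_mulfirst A c Z)"

lemma dia_Cons_Cons:
  "xs \<noteq> [] \<Longrightarrow> ys \<noteq> [] \<Longrightarrow>
   (a # xs) \<diamond> (b # ys) = dia_step (a \<otimes>\<^bsub>A\<^esub> b) (xs \<diamond> (\<one>\<^bsub>A\<^esub> # ys)) ((\<one>\<^bsub>A\<^esub> # xs) \<diamond> ys) (xs \<diamond> ys)"
  by (cases xs; cases ys) (auto simp: dia_step_def)

lemma dia_single_left: "[a] \<diamond> (b # ys) = [(\<one>\<^bsub>K\<^esub>, (a \<otimes>\<^bsub>A\<^esub> b) # ys)]"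
  by (cases ys) auto

lemma dia_single_right: "(a # xs) \<diamond> [b] = [(\<one>\<^bsub>K\<^esub>, (a \<otimes>\<^bsub>A\<^esub> b) # xs)]"
  by (cases xs) auto

lemma is_fsum_dia: "word_ok A v \<Longrightarrow> word_ok A w \<Longrightarrow> is_fsum (v \<diamond> w)"
  by (induction v w rule: dia_induct) (auto simp: dia_step_def l_closed k_closed word_ok_def)

lemma dia_step_teq:
  "X \<approx> X' \<Longrightarrow> Y \<approx> Y' \<Longrightarrow> Z \<approx> Z' \<Longrightarrow> c \<in> carrier A \<Longrightarrow> dia_step c X Y Z \<approx> dia_step c X' Y' Z'"
  unfolding dia_step_def
  by (intro teq_append fs_pre_teq teq.scal fs_mulfirst_teq) (auto simp: l_closed k_closed)

lemma dia_step_swap_teq: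
  "c \<in> carrier A \<Longrightarrow> is_fsum X \<Longrightarrow> is_fsum Y \<Longrightarrow> is_fsum Z \<Longrightarrow> dia_step c X Y Z \<approx> dia_step c Y X Z"
  unfolding dia_step_def by (rule teq_perm) (auto simp: l_closed k_closed)

lemma dia_step_append_teq:
  "c \<in> carrier A \<Longrightarrow> is_fsum X \<Longrightarrow> is_fsum Y \<Longrightarrow> is_fsum Z \<Longrightarrow>
   is_fsum X' \<Longrightarrow> is_fsum Y' \<Longrightarrow> is_fsum Z' \<Longrightarrow>
   dia_step c (X @ X') (Y @ Y') (Z @ Z') \<approx> dia_step c X Y Z @ dia_step c X' Y' Z'"
  unfolding dia_step_def by (rule teq_perm) (auto simp: l_closed k_closed ac_simps)

lemma dia_step_fs_smult:
  "c \<in> carrier A \<Longrightarrow> e \<in> carrier K \<Longrightarrow> is_fsum Z \<Longrightarrow>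
   dia_step c (fs_smult K e X) (fs_smult K e Y) (fs_smult K e Z) = fs_smult K e (dia_step c X Y Z)"
  unfolding dia_step_def
  by (simp add: fs_pre_fs_smult fs_mulfirst_fs_smult fs_smult_fs_smult l_closed k_closed R.m_comm)

lemma dia_mulfirst:
  assumes "a \<in> carrier A" "x \<in> carrier A" "set xs \<subseteq> carrier A" "word_ok A w"
  shows "((a \<otimes>\<^bsub>A\<^esub> x) # xs) \<diamond> w = fs_mulfirst A a ((x # xs) \<diamond> w)"
proof -
  obtain y ys where w: "w = y # ys" "y \<in> carrier A" "set ys \<subseteq> carrier A"
    using assms(4) by (rule word_okE)
  show ?thesis
  proof (cases "xs = [] \<or> ys = []")
    case True
    then show ?thesis using assms w by (auto simp: dia_single_left dia_single_right m_assoc)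
  next
    case False
    then have "is_fsum (xs \<diamond> ys)" using assms w by (auto intro!: is_fsum_dia simp: word_ok_def)
    with False assms w show ?thesis
      by (simp add: dia_Cons_Cons dia_step_def fs_mulfirst_fs_pre fs_mulfirst_fs_smult
          fs_mulfirst_fs_mulfirst m_assoc)
  qed
qed

lemma dia_Cons_eq_mulfirst:
  "c \<in> carrier A \<Longrightarrow> set v \<subseteq> carrier A \<Longrightarrow> word_ok A w \<Longrightarrow>
   (c # v) \<diamond> w = fs_mulfirst A c ((\<one>\<^bsub>A\<^esub> # v) \<diamond> w)"
  using dia_mulfirst[of c "\<one>\<^bsub>A\<^esub>" v w] by simp

lemma dia_add_first_letter_teq:
  assumes "set v \<subseteq> carrier A" "a \<in> carrier A" "b \<in> carrier A" "word_ok A w"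
  shows "((a \<oplus>\<^bsub>A\<^esub> b) # v) \<diamond> w \<approx> (a # v) \<diamond> w @ (b # v) \<diamond> w"
proof -
  have "is_fsum ((\<one>\<^bsub>A\<^esub> # v) \<diamond> w)" using assms by (intro is_fsum_dia) auto
  then show ?thesis
    using fs_mulfirst_add_teq[of _ a b] dia_Cons_eq_mulfirst[of a v w] dia_Cons_eq_mulfirst[of b v w]
      dia_Cons_eq_mulfirst[of "a \<oplus>\<^bsub>A\<^esub> b" v w] assms by simp
qed

lemma dia_smult_first_letter_teq:
  assumes "set v \<subseteq> carrier A" "a \<in> carrier A" "e \<in> carrier K" "word_ok A w"
  shows "((e \<odot>\<^bsub>A\<^esub> a) # v) \<diamond> w \<approx> fs_smult K e ((a # v) \<diamond> w)"
proof -
  have "is_fsum ((\<one>\<^bsub>A\<^esub> # v) \<diamond> w)" using assms by (intro is_fsum_dia) auto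
  then show ?thesis
    using fs_mulfirst_smult_teq[of _ e a] dia_Cons_eq_mulfirst[of a v w]
      dia_Cons_eq_mulfirst[of "e \<odot>\<^bsub>A\<^esub> a" v w] assms by simp
qed

lemma dia_add_letter_teq:
  assumes "set u \<subseteq> carrier A" "set v \<subseteq> carrier A" "a \<in> carrier A" "b \<in> carrier A" "word_ok A w"
  shows "(u @ (a \<oplus>\<^bsub>A\<^esub> b) # v) \<diamond> w \<approx> (u @ a # v) \<diamond> w @ (u @ b # v) \<diamond> w"
  using assms
proof (induction "length u + length w" arbitrary: u w rule: less_induct)
  case less
  obtain w0 ws where w: "w = w0 # ws" "w0 \<in> carrier A" "set ws \<subseteq> carrier A"
    using less.prems(5) by (rule word_okE)
  consider "u = []" | u0 u' where "u = u0 # u'" "ws = []" | u0 u' where "u = u0 # u'" "ws \<noteq> []"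
    by (cases u) auto
  then show ?case
  proof cases
    case 1
    with less.prems show ?thesis by (simp add: dia_add_first_letter_teq)
  next
    case (2 u0 u')
    then show ?thesis
      using teq.lin_add[of "\<one>\<^bsub>K\<^esub>" K "(u0 \<otimes>\<^bsub>A\<^esub> w0) # u'" A v a b] less.prems w
      by (simp add: dia_single_right)
  next
    case (3 u0 u')
    let ?c = "u0 \<otimes>\<^bsub>A\<^esub> w0"
    let ?D1 = "\<lambda>x. (u' @ x # v) \<diamond> (\<one>\<^bsub>A\<^esub> # ws)"
      and ?D2 = "\<lambda>x. (\<one>\<^bsub>A\<^esub> # u' @ x # v) \<diamond> ws" and ?D3 = "\<lambda>x. (u' @ x # v) \<diamond> ws"
    have IH: "(p @ (a \<oplus>\<^bsub>A\<^esub> b) # v) \<diamond> q \<approx> (p @ a # v) \<diamond> q @ (p @ b # v) \<diamond> q"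
      if "p \<in> {u', \<one>\<^bsub>A\<^esub> # u'}" "q \<in> {ws, \<one>\<^bsub>A\<^esub> # ws}"
        "length p + length q < length u + length w" for p q
      using that less 3 w by (intro less.hyps) (auto simp: word_ok_def)
    have fsums: "is_fsum (?D1 x)" "is_fsum (?D2 x)" "is_fsum (?D3 x)" if "x \<in> carrier A" for x
      using less.prems 3 w that by (auto intro!: is_fsum_dia simp: word_ok_def)
    have "(u @ (a \<oplus>\<^bsub>A\<^esub> b) # v) \<diamond> w = dia_step ?c (?D1 (a \<oplus>\<^bsub>A\<^esub> b)) (?D2 (a \<oplus>\<^bsub>A\<^esub> b)) (?D3 (a \<oplus>\<^bsub>A\<^esub> b))"
      using 3 w by (simp add: dia_Cons_Cons)
    also have "\<dots> \<approx> dia_step ?c (?D1 a @ ?D1 b) (?D2 a @ ?D2 b) (?D3 a @ ?D3 b)"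
      using IH[of u' "\<one>\<^bsub>A\<^esub> # ws"] IH[of "\<one>\<^bsub>A\<^esub> # u'" ws] IH[of u' ws] 3 w less.prems
      by (intro dia_step_teq) auto
    also have "\<dots> \<approx> dia_step ?c (?D1 a) (?D2 a) (?D3 a) @ dia_step ?c (?D1 b) (?D2 b) (?D3 b)"
      using fsums 3 w less.prems by (intro dia_step_append_teq) auto
    also have "\<dots> = (u @ a # v) \<diamond> w @ (u @ b # v) \<diamond> w"
      using 3 w by (simp add: dia_Cons_Cons)
    finally show ?thesis .
  qed
qed

lemma dia_smult_letter_teq:
  assumes "set u \<subseteq> carrier A" "set v \<subseteq> carrier A" "a \<in> carrier A" "e \<in> carrier K" "word_ok A w"
  shows "(u @ (e \<odot>\<^bsub>A\<^esub> a) # v) \<diamond> w \<approx> fs_smult K e ((u @ a # v) \<diamond> w)"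
  using assms
proof (induction "length u + length w" arbitrary: u w rule: less_induct)
  case less
  obtain w0 ws where w: "w = w0 # ws" "w0 \<in> carrier A" "set ws \<subseteq> carrier A"
    using less.prems(5) by (rule word_okE)
  consider "u = []" | u0 u' where "u = u0 # u'" "ws = []" | u0 u' where "u = u0 # u'" "ws \<noteq> []"
    by (cases u) auto
  then show ?case
  proof cases
    case 1
    with less.prems show ?thesis by (simp add: dia_smult_first_letter_teq)
  next
    case (2 u0 u')
    then show ?thesis
      using teq.lin_smult[of "\<one>\<^bsub>K\<^esub>" K e "(u0 \<otimes>\<^bsub>A\<^esub> w0) # u'" A v a] less.prems w
      by (simp add: dia_single_right)
  next
    case (3 u0 u')
    let ?c = "u0 \<otimes>\<^bsub>A\<^esub> w0"
    let ?D1 = "\<lambda>x. (u' @ x # v) \<diamond> (\<one>\<^bsub>A\<^esub> # ws)"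
      and ?D2 = "\<lambda>x. (\<one>\<^bsub>A\<^esub> # u' @ x # v) \<diamond> ws" and ?D3 = "\<lambda>x. (u' @ x # v) \<diamond> ws"
    have IH: "(p @ (e \<odot>\<^bsub>A\<^esub> a) # v) \<diamond> q \<approx> fs_smult K e ((p @ a # v) \<diamond> q)"
      if "p \<in> {u', \<one>\<^bsub>A\<^esub> # u'}" "q \<in> {ws, \<one>\<^bsub>A\<^esub> # ws}"
        "length p + length q < length u + length w" for p q
      using that less 3 w by (intro less.hyps) (auto simp: word_ok_def)
    have "is_fsum (?D3 a)"
      using less.prems 3 w by (auto intro!: is_fsum_dia simp: word_ok_def)
    have "(u @ (e \<odot>\<^bsub>A\<^esub> a) # v) \<diamond> w = dia_step ?c (?D1 (e \<odot>\<^bsub>A\<^esub> a)) (?D2 (e \<odot>\<^bsub>A\<^esub> a)) (?D3 (e \<odot>\<^bsub>A\<^esub> a))"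
      using 3 w by (simp add: dia_Cons_Cons)
    also have "\<dots> \<approx> dia_step ?c (fs_smult K e (?D1 a)) (fs_smult K e (?D2 a)) (fs_smult K e (?D3 a))"
      using IH[of u' "\<one>\<^bsub>A\<^esub> # ws"] IH[of "\<one>\<^bsub>A\<^esub> # u'" ws] IH[of u' ws] 3 w less.prems
      by (intro dia_step_teq) auto
    also have "\<dots> = fs_smult K e ((u @ a # v) \<diamond> w)"
      using 3 w less.prems \<open>is_fsum (?D3 a)\<close> by (simp add: dia_Cons_Cons dia_step_fs_smult)
    finally show ?thesis .
  qed
qed

lemma dia_commute_teq: "word_ok A v \<Longrightarrow> word_ok A w \<Longrightarrow> v \<diamond> w \<approx> w \<diamond> v"
proof (induction v w rule: dia_induct)
  case (Cons_Cons a a1 as b b1 bs)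
  let ?x = "a1 # as" and ?y = "b1 # bs"
  have words: "word_ok A ?x" "word_ok A ?y" "word_ok A (\<one>\<^bsub>A\<^esub> # ?x)" "word_ok A (\<one>\<^bsub>A\<^esub> # ?y)"
    "a \<in> carrier A" "b \<in> carrier A" using Cons_Cons.prems by auto
  have "(a # ?x) \<diamond> (b # ?y) = dia_step (a \<otimes>\<^bsub>A\<^esub> b) (?x \<diamond> (\<one>\<^bsub>A\<^esub> # ?y)) ((\<one>\<^bsub>A\<^esub> # ?x) \<diamond> ?y) (?x \<diamond> ?y)"
    by (simp add: dia_step_def)
  also have "\<dots> \<approx> dia_step (a \<otimes>\<^bsub>A\<^esub> b) ((\<one>\<^bsub>A\<^esub> # ?y) \<diamond> ?x) (?y \<diamond> (\<one>\<^bsub>A\<^esub> # ?x)) (?y \<diamond> ?x)"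
    using Cons_Cons words by (intro dia_step_teq) auto
  also have "\<dots> \<approx> dia_step (a \<otimes>\<^bsub>A\<^esub> b) (?y \<diamond> (\<one>\<^bsub>A\<^esub> # ?x)) ((\<one>\<^bsub>A\<^esub> # ?y) \<diamond> ?x) (?y \<diamond> ?x)"
    using words by (intro dia_step_swap_teq) (auto intro!: is_fsum_dia)
  also have "\<dots> = (b # ?y) \<diamond> (a # ?x)"
    using words by (simp add: dia_step_def m_comm)
  finally show ?case .
qed (auto simp: m_comm word_ok_def intro: teq.refl)

abbreviation fmult :: "('k \<times> 'a list) list \<Rightarrow> ('k \<times> 'a list) list \<Rightarrow> ('k \<times> 'a list) list" where
  "fmult X Y \<equiv> fs_mult K A l k X Y"

definition fmult_term :: "'k \<Rightarrow> 'a list \<Rightarrow> ('k \<times> 'a list) list \<Rightarrow> ('k \<times> 'a list) list" where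
  "fmult_term c v Y = concat (map (\<lambda>(d,w). fs_smult K (c \<otimes>\<^bsub>K\<^esub> d) (v \<diamond> w)) Y)"

lemma fmult_Nil [simp]: "fmult [] Y = []"
  by (simp add: fs_mult_def)

lemma fmult_Cons [simp]: "fmult ((c,v) # X) Y = fmult_term c v Y @ fmult X Y"
  by (simp add: fs_mult_def fmult_term_def)

lemma fmult_append [simp]: "fmult (X @ X') Y = fmult X Y @ fmult X' Y"
  by (simp add: fs_mult_def)

lemma fmult_term_Nil [simp]: "fmult_term c v [] = []"
  by (simp add: fmult_term_def)

lemma fmult_term_Cons [simp]:
  "fmult_term c v ((d,w) # Y) = fs_smult K (c \<otimes>\<^bsub>K\<^esub> d) (v \<diamond> w) @ fmult_term c v Y"
  by (simp add: fmult_term_def)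

lemma is_fsum_fmult_term [simp]:
  "c \<in> carrier K \<Longrightarrow> word_ok A v \<Longrightarrow> is_fsum Y \<Longrightarrow> is_fsum (fmult_term c v Y)"
  by (induction Y) (auto simp: is_fsum_dia)

lemma is_fsum_fmult [simp]: "is_fsum X \<Longrightarrow> is_fsum Y \<Longrightarrow> is_fsum (fmult X Y)"
  by (induction X) auto

lemma fmult_term_smult:
  "e \<in> carrier K \<Longrightarrow> c \<in> carrier K \<Longrightarrow> word_ok A v \<Longrightarrow> is_fsum Y \<Longrightarrow>
   fmult_term (e \<otimes>\<^bsub>K\<^esub> c) v Y = fs_smult K e (fmult_term c v Y)"
  by (induction Y) (auto simp: fs_smult_fs_smult is_fsum_dia R.m_assoc)

lemma fmult_smult_left:
  "e \<in> carrier K \<Longrightarrow> is_fsum X \<Longrightarrow> is_fsum Y \<Longrightarrow> fmult (fs_smult K e X) Y = fs_smult K e (fmult X Y)"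
  by (induction X) (auto simp: fmult_term_smult)

lemma fmult_term_add_teq:
  "c \<in> carrier K \<Longrightarrow> d \<in> carrier K \<Longrightarrow> word_ok A v \<Longrightarrow> is_fsum Y \<Longrightarrow>
   fmult_term (c \<oplus>\<^bsub>K\<^esub> d) v Y \<approx> fmult_term c v Y @ fmult_term d v Y"
proof (induction Y)
  case Nil
  then show ?case by (simp add: teq.refl)
next
  case (Cons y Y)
  obtain e w where y: "y = (e,w)" by force
  with Cons.prems have ew: "e \<in> carrier K" "word_ok A w" "is_fsum Y" by auto
  let ?T = "\<lambda>c. fs_smult K (c \<otimes>\<^bsub>K\<^esub> e) (v \<diamond> w)"
  have "?T (c \<oplus>\<^bsub>K\<^esub> d) \<approx> ?T c @ ?T d"
    using fs_smult_add_teq[of "c \<otimes>\<^bsub>K\<^esub> e" "d \<otimes>\<^bsub>K\<^esub> e" "v \<diamond> w"] Cons.prems ew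
    by (simp add: R.l_distr is_fsum_dia)
  then have "?T (c \<oplus>\<^bsub>K\<^esub> d) @ fmult_term (c \<oplus>\<^bsub>K\<^esub> d) v Y \<approx>
      (?T c @ ?T d) @ (fmult_term c v Y @ fmult_term d v Y)"
    using Cons ew by (intro teq_append) auto
  also have "\<dots> \<approx> (?T c @ fmult_term c v Y) @ (?T d @ fmult_term d v Y)"
    by (rule teq_perm) (use Cons.prems ew in \<open>auto simp: is_fsum_dia\<close>)
  finally show ?case using y by simp
qed

lemma fmult_term_zero_teq: "word_ok A v \<Longrightarrow> is_fsum Y \<Longrightarrow> fmult_term \<zero>\<^bsub>K\<^esub> v Y \<approx> []"
proof (induction Y)
  case Nil
  then show ?case by (simp add: teq.refl)
next
  case (Cons y Y)
  obtain e w where y: "y = (e,w)" by force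
  with Cons.prems have ew: "e \<in> carrier K" "word_ok A w" "is_fsum Y" by auto
  then have "fs_smult K (\<zero>\<^bsub>K\<^esub> \<otimes>\<^bsub>K\<^esub> e) (v \<diamond> w) @ fmult_term \<zero>\<^bsub>K\<^esub> v Y \<approx> [] @ []"
    using fs_smult_zero_teq[of "v \<diamond> w"] Cons by (intro teq_append) (auto simp: is_fsum_dia)
  then show ?case using y by simp
qed

lemma fmult_term_add_letter_teq:
  assumes "c \<in> carrier K" "set u \<subseteq> carrier A" "set v \<subseteq> carrier A" "a \<in> carrier A" "b \<in> carrier A"
    and "is_fsum Y"
  shows "fmult_term c (u @ (a \<oplus>\<^bsub>A\<^esub> b) # v) Y \<approx> fmult_term c (u @ a # v) Y @ fmult_term c (u @ b # v) Y"
  using assms(6)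
proof (induction Y)
  case Nil
  then show ?case by (simp add: teq.refl)
next
  case (Cons y Y)
  obtain e w where y: "y = (e,w)" by force
  with Cons.prems have ew: "e \<in> carrier K" "word_ok A w" "is_fsum Y" by auto
  have words: "word_ok A (u @ x # v)" if "x \<in> carrier A" for x
    using assms that by (auto simp: word_ok_def)
  let ?T = "\<lambda>x. fs_smult K (c \<otimes>\<^bsub>K\<^esub> e) ((u @ x # v) \<diamond> w)"
  have "?T (a \<oplus>\<^bsub>A\<^esub> b) @ fmult_term c (u @ (a \<oplus>\<^bsub>A\<^esub> b) # v) Y \<approx>
      fs_smult K (c \<otimes>\<^bsub>K\<^esub> e) ((u @ a # v) \<diamond> w @ (u @ b # v) \<diamond> w) @
      (fmult_term c (u @ a # v) Y @ fmult_term c (u @ b # v) Y)"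
    using Cons assms ew by (intro teq_append teq.scal dia_add_letter_teq) auto
  also have "\<dots> \<approx> (?T a @ fmult_term c (u @ a # v) Y) @ (?T b @ fmult_term c (u @ b # v) Y)"
    by (rule teq_perm) (use assms ew words in \<open>auto simp: is_fsum_dia\<close>)
  finally show ?case using y by simp
qed

lemma fmult_term_smult_letter_teq:
  assumes "c \<in> carrier K" "set u \<subseteq> carrier A" "set v \<subseteq> carrier A" "a \<in> carrier A" "d \<in> carrier K"
    and "is_fsum Y"
  shows "fmult_term c (u @ (d \<odot>\<^bsub>A\<^esub> a) # v) Y \<approx> fmult_term (c \<otimes>\<^bsub>K\<^esub> d) (u @ a # v) Y"
  using assms(6)
proof (induction Y)
  case Nil
  then show ?case by (simp add: teq.refl)
next
  case (Cons y Y)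
  obtain e w where y: "y = (e,w)" by force
  with Cons.prems have ew: "e \<in> carrier K" "word_ok A w" "is_fsum Y" by auto
  have word: "word_ok A (u @ a # v)" using assms by (auto simp: word_ok_def)
  have "fs_smult K (c \<otimes>\<^bsub>K\<^esub> e) ((u @ (d \<odot>\<^bsub>A\<^esub> a) # v) \<diamond> w) @ fmult_term c (u @ (d \<odot>\<^bsub>A\<^esub> a) # v) Y \<approx>
     fs_smult K (c \<otimes>\<^bsub>K\<^esub> e) (fs_smult K d ((u @ a # v) \<diamond> w)) @ fmult_term (c \<otimes>\<^bsub>K\<^esub> d) (u @ a # v) Y"
    using Cons assms ew by (intro teq_append teq.scal dia_smult_letter_teq) auto
  also have "fs_smult K (c \<otimes>\<^bsub>K\<^esub> e) (fs_smult K d ((u @ a # v) \<diamond> w)) =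
      fs_smult K (c \<otimes>\<^bsub>K\<^esub> d \<otimes>\<^bsub>K\<^esub> e) ((u @ a # v) \<diamond> w)"
    using assms ew word by (simp add: fs_smult_fs_smult is_fsum_dia R.m_assoc R.m_comm R.m_lcomm)
  finally show ?case using y by simp
qed

lemma fmult_teq_left: "X \<approx> X' \<Longrightarrow> is_fsum Y \<Longrightarrow> fmult X Y \<approx> fmult X' Y"
proof (induction rule: teq.induct)
  case (trans X Y Z)
  then show ?case by (meson teq.trans)
next
  case (scal X Z e)
  then show ?case using teq_is_fsum[OF scal.hyps(1)] by (simp add: fmult_smult_left teq.scal)
next
  case (coeff_add c d w)
  then show ?case using teq.sym[OF fmult_term_add_teq[of c d w Y]] by simp
next
  case (coeff_zero w)
  then show ?case using fmult_term_zero_teq[of w Y] by simp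
next
  case (lin_add c u v a b)
  then show ?case using fmult_term_add_letter_teq[of c u v a b Y] by simp
next
  case (lin_smult c d u v a)
  then show ?case using fmult_term_smult_letter_teq[of c u v a d Y] by simp
qed (simp_all add: teq.refl teq.sym teq_append teq.comm)

lemma fmult_commute_teq: "is_fsum X \<Longrightarrow> is_fsum Y \<Longrightarrow> fmult X Y \<approx> fmult Y X"
proof -
  assume X: "is_fsum X" and Y: "is_fsum Y"
  let ?F = "\<lambda>(c,v) (d,w). fs_smult K (c \<otimes>\<^bsub>K\<^esub> d) (v \<diamond> w)"
  have "fmult X Y = concat (map (\<lambda>x. concat (map (?F x) Y)) X)"
    by (simp add: fs_mult_def split_def)
  also have "\<dots> \<approx> concat (map (\<lambda>y. concat (map (\<lambda>x. ?F x y) X)) Y)"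
    by (rule teq_perm)
      (use X Y in \<open>auto simp: mset_concat_map_swap[of ?F] is_fsum_dia dest!: is_fsumD\<close>)
  also have "\<dots> \<approx> concat (map (\<lambda>y. concat (map (\<lambda>x. ?F y x) X)) Y)"
  proof (intro teq_concat_map)
    fix y x assume "y \<in> set Y" and "x \<in> set X"
    moreover obtain c v d w where "x = (c,v)" "y = (d,w)" by force
    ultimately show "?F x y \<approx> ?F y x"
      using X Y by (auto dest!: is_fsumD simp: R.m_comm teq.scal dia_commute_teq)
  qed
  also have "\<dots> = fmult Y X"
    by (simp add: fs_mult_def split_def)
  finally show ?thesis .
qed

lemma fmult_teq: "X \<approx> X' \<Longrightarrow> Y \<approx> Y' \<Longrightarrow> fmult X Y \<approx> fmult X' Y'"
proof -
  assume XY: "X \<approx> X'" "Y \<approx> Y'"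
  then have "fmult X Y \<approx> fmult X' Y" using fmult_teq_left teq_is_fsum by blast
  also have "\<dots> \<approx> fmult Y X'" using XY teq_is_fsum fmult_commute_teq by blast
  also have "\<dots> \<approx> fmult Y' X'" using XY fmult_teq_left teq_is_fsum by blast
  also have "\<dots> \<approx> fmult X' Y'" using XY teq_is_fsum fmult_commute_teq by blast
  finally show ?thesis .
qed

section \<open>The quotient\<close>

abbreviation Sha :: "('k, ('k \<times> 'a list) list set) module" where
  "Sha \<equiv> Sha_e K A l k"

abbreviation cls :: "('k \<times> 'a list) list \<Rightarrow> ('k \<times> 'a list) list set" where
  "cls X \<equiv> tcls K A X"

lemma fsum_in_cls: "is_fsum X \<Longrightarrow> X \<in> cls X"
  by (simp add: tcls_def teq.refl)

lemma cls_eqI: "X \<approx> Y \<Longrightarrow> cls X = cls Y"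
  unfolding tcls_def by (auto intro: teq.trans teq.sym)

lemma trep_cls: "is_fsum X \<Longrightarrow> trep (cls X) \<approx> X"
proof -
  assume "is_fsum X"
  then have "trep (cls X) \<in> cls X" unfolding trep_def by (rule someI[of "\<lambda>Y. Y \<in> cls X", OF fsum_in_cls])
  then show ?thesis by (simp add: tcls_def teq.sym)
qed

lemma cls_in_carrier [simp]: "is_fsum X \<Longrightarrow> cls X \<in> carrier Sha"
  by (simp add: Sha_e_def)

lemma carrier_ShaE:
  assumes "S \<in> carrier Sha" obtains X where "is_fsum X" "S = cls X"
  using assms by (auto simp: Sha_e_def)

lemma Sha_add_cls: "is_fsum X \<Longrightarrow> is_fsum Y \<Longrightarrow> cls X \<oplus>\<^bsub>Sha\<^esub> cls Y = cls (X @ Y)"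
  by (simp add: Sha_e_def) (intro cls_eqI teq_append trep_cls)

lemma Sha_mult_cls: "is_fsum X \<Longrightarrow> is_fsum Y \<Longrightarrow> cls X \<otimes>\<^bsub>Sha\<^esub> cls Y = cls (fmult X Y)"
  by (simp add: Sha_e_def) (intro cls_eqI fmult_teq trep_cls)

lemma Sha_smult_cls: "c \<in> carrier K \<Longrightarrow> is_fsum X \<Longrightarrow> c \<odot>\<^bsub>Sha\<^esub> cls X = cls (fs_smult K c X)"
  by (simp add: Sha_e_def) (intro cls_eqI teq.scal trep_cls)

lemma Sha_zero: "\<zero>\<^bsub>Sha\<^esub> = cls []"
  by (simp add: Sha_e_def)

lemma Sha_one: "\<one>\<^bsub>Sha\<^esub> = cls [(\<one>\<^bsub>K\<^esub>, [\<one>\<^bsub>A\<^esub>])]"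
  by (simp add: Sha_e_def)

lemma P_e_cls: "is_fsum X \<Longrightarrow> P_e K A (cls X) = cls (fs_pre \<one>\<^bsub>A\<^esub> X)"
  by (simp add: P_e_def) (intro cls_eqI fs_pre_teq trep_cls, auto)

lemma Sha_abelian_group: "abelian_group Sha"
proof (rule abelian_groupI)
  fix S assume "S \<in> carrier Sha"
  then obtain X where X: "is_fsum X" "S = cls X" by (rule carrier_ShaE)
  let ?negX = "fs_smult K (\<ominus>\<^bsub>K\<^esub> \<one>\<^bsub>K\<^esub>) X"
  have "?negX @ X \<approx> X @ ?negX" by (rule teq_perm) (use X in auto)
  also have "\<dots> \<approx> []" by (rule fs_append_neg_teq[OF X(1)])
  finally have "cls ?negX \<oplus>\<^bsub>Sha\<^esub> S = \<zero>\<^bsub>Sha\<^esub>" using X by (simp add: Sha_add_cls Sha_zero cls_eqI)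
  then show "\<exists>T\<in>carrier Sha. T \<oplus>\<^bsub>Sha\<^esub> S = \<zero>\<^bsub>Sha\<^esub>" using X by (intro bexI[of _ "cls ?negX"]) auto
next
  fix S T assume "S \<in> carrier Sha" "T \<in> carrier Sha"
  then show "S \<oplus>\<^bsub>Sha\<^esub> T = T \<oplus>\<^bsub>Sha\<^esub> S"
    by (elim carrier_ShaE) (simp add: Sha_add_cls, rule cls_eqI, rule teq_perm, auto)
qed (auto elim!: carrier_ShaE simp: Sha_add_cls Sha_zero)

lemma Sha_module: "module K Sha"
proof (rule moduleI)
  fix a b S assume "a \<in> carrier K" "b \<in> carrier K" "S \<in> carrier Sha"
  then show "(a \<oplus>\<^bsub>K\<^esub> b) \<odot>\<^bsub>Sha\<^esub> S = a \<odot>\<^bsub>Sha\<^esub> S \<oplus>\<^bsub>Sha\<^esub> b \<odot>\<^bsub>Sha\<^esub> S"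
    by (elim carrier_ShaE) (simp add: Sha_smult_cls Sha_add_cls, rule cls_eqI, rule fs_smult_add_teq, auto)
qed (auto elim!: carrier_ShaE simp: R.is_cring Sha_abelian_group Sha_smult_cls Sha_add_cls
       fs_smult_fs_smult fs_smult_one)

sublocale S: module K Sha
  by (rule Sha_module)

abbreviation Sha_mult (infixl \<open>\<star>\<close> 70) where "S \<star> T \<equiv> S \<otimes>\<^bsub>Sha\<^esub> T"
abbreviation Sha_add (infixl \<open>\<boxplus>\<close> 65) where "S \<boxplus> T \<equiv> S \<oplus>\<^bsub>Sha\<^esub> T"
abbreviation Sha_smult (infixr \<open>\<cdot>\<close> 75) where "c \<cdot> S \<equiv> c \<odot>\<^bsub>Sha\<^esub> S"
abbreviation Pe where "Pe \<equiv> P_e K A"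

definition mul_first :: "'a \<Rightarrow> ('k \<times> 'a list) list set \<Rightarrow> ('k \<times> 'a list) list set" where
  "mul_first a S = cls (fs_mulfirst A a (trep S))"

definition pure :: "'a list \<Rightarrow> ('k \<times> 'a list) list set" where
  "pure w = cls [(\<one>\<^bsub>K\<^esub>, w)]"

lemma mul_first_cls: "a \<in> carrier A \<Longrightarrow> is_fsum X \<Longrightarrow> mul_first a (cls X) = cls (fs_mulfirst A a X)"
  unfolding mul_first_def by (intro cls_eqI fs_mulfirst_teq trep_cls)

lemma pure_closed [simp]: "word_ok A w \<Longrightarrow> pure w \<in> carrier Sha"
  by (simp add: pure_def)

lemma Sha_mult_closed [simp]: "S \<in> carrier Sha \<Longrightarrow> T \<in> carrier Sha \<Longrightarrow> S \<star> T \<in> carrier Sha"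
  by (auto elim!: carrier_ShaE simp: Sha_mult_cls)

lemma Pe_closed [simp]: "S \<in> carrier Sha \<Longrightarrow> Pe S \<in> carrier Sha"
  by (auto elim!: carrier_ShaE simp: P_e_cls)

lemma mul_first_closed [simp]: "a \<in> carrier A \<Longrightarrow> S \<in> carrier Sha \<Longrightarrow> mul_first a S \<in> carrier Sha"
  by (auto elim!: carrier_ShaE simp: mul_first_cls)

lemma Sha_l_distr:
  "S \<in> carrier Sha \<Longrightarrow> T \<in> carrier Sha \<Longrightarrow> U \<in> carrier Sha \<Longrightarrow> (S \<boxplus> T) \<star> U = S \<star> U \<boxplus> T \<star> U"
  by (auto elim!: carrier_ShaE simp: Sha_mult_cls Sha_add_cls)

lemma Sha_mult_commute: "S \<in> carrier Sha \<Longrightarrow> T \<in> carrier Sha \<Longrightarrow> S \<star> T = T \<star> S"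
  by (elim carrier_ShaE) (simp add: Sha_mult_cls, rule cls_eqI, rule fmult_commute_teq, auto)

lemma Sha_r_distr:
  "S \<in> carrier Sha \<Longrightarrow> T \<in> carrier Sha \<Longrightarrow> U \<in> carrier Sha \<Longrightarrow> U \<star> (S \<boxplus> T) = U \<star> S \<boxplus> U \<star> T"
  by (simp add: Sha_mult_commute[of U] Sha_l_distr)

lemma Sha_smult_mult_left:
  "c \<in> carrier K \<Longrightarrow> S \<in> carrier Sha \<Longrightarrow> T \<in> carrier Sha \<Longrightarrow> (c \<cdot> S) \<star> T = c \<cdot> (S \<star> T)"
  by (auto elim!: carrier_ShaE simp: Sha_mult_cls Sha_smult_cls fmult_smult_left)

lemma Sha_smult_mult_right:
  "c \<in> carrier K \<Longrightarrow> S \<in> carrier Sha \<Longrightarrow> T \<in> carrier Sha \<Longrightarrow> T \<star> (c \<cdot> S) = c \<cdot> (T \<star> S)"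
  by (simp add: Sha_mult_commute[of T] Sha_smult_mult_left)

lemma Pe_add: "S \<in> carrier Sha \<Longrightarrow> T \<in> carrier Sha \<Longrightarrow> Pe (S \<boxplus> T) = Pe S \<boxplus> Pe T"
  by (auto elim!: carrier_ShaE simp: P_e_cls Sha_add_cls)

lemma Pe_smult: "c \<in> carrier K \<Longrightarrow> S \<in> carrier Sha \<Longrightarrow> Pe (c \<cdot> S) = c \<cdot> Pe S"
  by (auto elim!: carrier_ShaE simp: P_e_cls Sha_smult_cls fs_pre_fs_smult)

lemma mul_first_add:
  "a \<in> carrier A \<Longrightarrow> S \<in> carrier Sha \<Longrightarrow> T \<in> carrier Sha \<Longrightarrow> mul_first a (S \<boxplus> T) = mul_first a S \<boxplus> mul_first a T"
  by (auto elim!: carrier_ShaE simp: mul_first_cls Sha_add_cls)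

lemma mul_first_smult:
  "a \<in> carrier A \<Longrightarrow> c \<in> carrier K \<Longrightarrow> S \<in> carrier Sha \<Longrightarrow> mul_first a (c \<cdot> S) = c \<cdot> mul_first a S"
  by (auto elim!: carrier_ShaE simp: mul_first_cls Sha_smult_cls fs_mulfirst_fs_smult)

lemma mul_first_one: "S \<in> carrier Sha \<Longrightarrow> mul_first \<one>\<^bsub>A\<^esub> S = S"
  by (auto elim!: carrier_ShaE simp: mul_first_cls fs_mulfirst_one)

lemma fmult_mulfirst_left:
  assumes "is_fsum X" "is_fsum Y" "a \<in> carrier A"
  shows "fmult (fs_mulfirst A a X) Y = fs_mulfirst A a (fmult X Y)"
  using assms
proof (induction X rule: fsum_induct)
  case (Cons c v0 v X)
  then have letters: "a \<in> carrier A" "v0 \<in> carrier A" "set v \<subseteq> carrier A" by auto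
  have "fmult_term c ((a \<otimes>\<^bsub>A\<^esub> v0) # v) Y = fs_mulfirst A a (fmult_term c (v0 # v) Y)"
    using \<open>is_fsum Y\<close>
  proof (induction Y)
    case (Cons y Y)
    obtain d w where "y = (d,w)" by force
    with Cons show ?case using dia_mulfirst[OF letters] by (simp add: fs_mulfirst_fs_smult)
  qed simp
  with Cons show ?case by simp
qed simp

lemma mul_first_mult_left:
  "a \<in> carrier A \<Longrightarrow> S \<in> carrier Sha \<Longrightarrow> T \<in> carrier Sha \<Longrightarrow> mul_first a S \<star> T = mul_first a (S \<star> T)"
  by (auto elim!: carrier_ShaE simp: mul_first_cls Sha_mult_cls fmult_mulfirst_left)

lemma mul_first_mult_right:
  "a \<in> carrier A \<Longrightarrow> S \<in> carrier Sha \<Longrightarrow> T \<in> carrier Sha \<Longrightarrow> S \<star> mul_first a T = mul_first a (S \<star> T)"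
  by (simp add: Sha_mult_commute[of S] mul_first_mult_left)

lemma fmult_single_letter:
  assumes "is_fsum X" shows "fmult [(\<one>\<^bsub>K\<^esub>, [a])] X = fs_mulfirst A a X"
  using assms by (induction X rule: fsum_induct) (auto simp: dia_single_left)

lemma pure_single_mult: "a \<in> carrier A \<Longrightarrow> S \<in> carrier Sha \<Longrightarrow> pure [a] \<star> S = mul_first a S"
  by (auto elim!: carrier_ShaE simp: pure_def mul_first_cls Sha_mult_cls fmult_single_letter
      simp del: fmult_Cons)

lemma pure_Cons: "a \<in> carrier A \<Longrightarrow> word_ok A w \<Longrightarrow> pure (a # w) = mul_first a (Pe (pure w))"
  by (simp add: pure_def P_e_cls mul_first_cls word_ok_def)

lemma pure_one: "pure [\<one>\<^bsub>A\<^esub>] = \<one>\<^bsub>Sha\<^esub>"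
  by (simp add: pure_def Sha_one)

lemma Sha_one_mult: "S \<in> carrier Sha \<Longrightarrow> \<one>\<^bsub>Sha\<^esub> \<star> S = S"
  using pure_single_mult[of "\<one>\<^bsub>A\<^esub>" S] by (simp add: pure_one mul_first_one)

lemma Sha_one_closed [simp]: "\<one>\<^bsub>Sha\<^esub> \<in> carrier Sha"
  by (simp add: Sha_one)

lemma Sha_mult_one: "S \<in> carrier Sha \<Longrightarrow> S \<star> \<one>\<^bsub>Sha\<^esub> = S"
  using Sha_one_mult Sha_mult_commute[of S] by simp

lemma Pe_pure: "w \<noteq> [] \<Longrightarrow> set w \<subseteq> carrier A \<Longrightarrow> Pe (pure w) = pure (\<one>\<^bsub>A\<^esub> # w)"
  by (simp add: pure_def P_e_cls word_ok_def)

lemma pure_eq_mul_first: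
  assumes "a \<in> carrier A" "set w \<subseteq> carrier A"
  shows "pure (a # w) = mul_first a (if w = [] then \<one>\<^bsub>Sha\<^esub> else Pe (pure w))"
proof (cases "w = []")
  case True
  then show ?thesis
    using pure_single_mult[of a "\<one>\<^bsub>Sha\<^esub>"] Sha_mult_one[of "pure [a]"] assms by simp
qed (use assms pure_Cons in \<open>auto simp: word_ok_def\<close>)

lemma smult_pure: "c \<in> carrier K \<Longrightarrow> word_ok A w \<Longrightarrow> c \<cdot> pure w = cls [(c, w)]"
  by (simp add: pure_def Sha_smult_cls)

definition sha_linear :: "('k, 'b) module \<Rightarrow> (('k \<times> 'a list) list set \<Rightarrow> 'b) \<Rightarrow> bool" where
  "sha_linear M f \<longleftrightarrow> (\<forall>S\<in>carrier Sha. f S \<in> carrier M) \<and>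
     (\<forall>S\<in>carrier Sha. \<forall>T\<in>carrier Sha. f (S \<boxplus> T) = f S \<oplus>\<^bsub>M\<^esub> f T) \<and>
     (\<forall>c\<in>carrier K. \<forall>S\<in>carrier Sha. f (c \<cdot> S) = c \<odot>\<^bsub>M\<^esub> f S)"

lemma sha_linear_eqI:
  assumes M: "module K M" and f: "sha_linear M f" and g: "sha_linear M g"
    and on_pure: "\<And>w. word_ok A w \<Longrightarrow> f (pure w) = g (pure w)"
    and S: "S \<in> carrier Sha"
  shows "f S = g S"
proof -
  interpret M: module K M by (rule M)
  have zero: "h \<zero>\<^bsub>Sha\<^esub> = \<zero>\<^bsub>M\<^esub>" if "sha_linear M h" for h
  proof -
    have "h \<zero>\<^bsub>Sha\<^esub> = h (\<zero>\<^bsub>K\<^esub> \<cdot> \<zero>\<^bsub>Sha\<^esub>)" by simp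
    also have "\<dots> = \<zero>\<^bsub>K\<^esub> \<odot>\<^bsub>M\<^esub> h \<zero>\<^bsub>Sha\<^esub>"
      using that R.zero_closed S.zero_closed unfolding sha_linear_def by blast
    also have "\<dots> = \<zero>\<^bsub>M\<^esub>" using that by (auto simp: sha_linear_def)
    finally show ?thesis .
  qed
  obtain X where X: "is_fsum X" "S = cls X" using S by (rule carrier_ShaE)
  have "f (cls X) = g (cls X)" using X(1)
  proof (induction X)
    case Nil
    show ?case using zero[OF f] zero[OF g] by (simp add: Sha_zero[symmetric])
  next
    case (Cons x X)
    obtain c w where x: "x = (c,w)" by force
    with Cons.prems have cw: "c \<in> carrier K" "word_ok A w" "is_fsum X" by auto
    then have "cls (x # X) = c \<cdot> pure w \<boxplus> cls X" using x by (simp add: smult_pure Sha_add_cls)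
    with Cons cw f g on_pure show ?case by (simp add: sha_linear_def)
  qed
  with X show ?thesis by simp
qed

lemma sha_linear_id: "sha_linear Sha (\<lambda>S. S)"
  by (simp add: sha_linear_def)

lemma sha_linear_add: "sha_linear Sha f \<Longrightarrow> sha_linear Sha g \<Longrightarrow> sha_linear Sha (\<lambda>S. f S \<boxplus> g S)"
  unfolding sha_linear_def by (auto simp: S.a_ac S.smult_r_distr)

lemma sha_linear_smult: "c \<in> carrier K \<Longrightarrow> sha_linear Sha f \<Longrightarrow> sha_linear Sha (\<lambda>S. c \<cdot> f S)"
  unfolding sha_linear_def by (auto simp: S.smult_r_distr S.smult_assoc1[symmetric] R.m_comm)

lemma sha_linear_Pe: "sha_linear Sha f \<Longrightarrow> sha_linear Sha (\<lambda>S. Pe (f S))"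
  unfolding sha_linear_def by (auto simp: Pe_add Pe_smult)

lemma sha_linear_mul_first: "a \<in> carrier A \<Longrightarrow> sha_linear Sha f \<Longrightarrow> sha_linear Sha (\<lambda>S. mul_first a (f S))"
  unfolding sha_linear_def by (auto simp: mul_first_add mul_first_smult)

lemma sha_linear_mult_left: "T \<in> carrier Sha \<Longrightarrow> sha_linear Sha f \<Longrightarrow> sha_linear Sha (\<lambda>S. f S \<star> T)"
  unfolding sha_linear_def by (auto simp: Sha_l_distr Sha_smult_mult_left)

lemma sha_linear_mult_right: "T \<in> carrier Sha \<Longrightarrow> sha_linear Sha f \<Longrightarrow> sha_linear Sha (\<lambda>S. T \<star> f S)"
  unfolding sha_linear_def by (auto simp: Sha_r_distr Sha_smult_mult_right)

lemmas sha_linear_intros = sha_linear_id sha_linear_add sha_linear_smult sha_linear_Pe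
  sha_linear_mul_first sha_linear_mult_left sha_linear_mult_right

section \<open>The Rota-Baxter identity\<close>

lemma RB_pure:
  assumes v: "word_ok A v" and w: "word_ok A w"
  shows "Pe (pure v) \<star> Pe (pure w) =
    Pe (pure v \<star> Pe (pure w)) \<boxplus> Pe (Pe (pure v) \<star> pure w) \<boxplus> l \<cdot> Pe (pure v \<star> pure w)
    \<boxplus> k \<cdot> (pure v \<star> pure w)"
proof -
  have fsums: "is_fsum (v \<diamond> (\<one>\<^bsub>A\<^esub> # w))" "is_fsum ((\<one>\<^bsub>A\<^esub> # v) \<diamond> w)" "is_fsum (v \<diamond> w)"
    using v w by (auto intro!: is_fsum_dia simp: word_ok_def)
  have "(\<one>\<^bsub>A\<^esub> # v) \<diamond> (\<one>\<^bsub>A\<^esub> # w) = dia_step \<one>\<^bsub>A\<^esub> (v \<diamond> (\<one>\<^bsub>A\<^esub> # w)) ((\<one>\<^bsub>A\<^esub> # v) \<diamond> w) (v \<diamond> w)"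
    using v w dia_Cons_Cons[of v w "\<one>\<^bsub>A\<^esub>" "\<one>\<^bsub>A\<^esub>"] by (simp add: word_ok_def)
  with v w fsums show ?thesis
    by (simp add: pure_def P_e_cls Sha_mult_cls Sha_add_cls Sha_smult_cls dia_step_def fs_mulfirst_one
        fs_pre_fs_smult fs_smult_one is_fsum_dia word_ok_def l_closed k_closed)
qed

lemma Sha_RB:
  assumes S: "S \<in> carrier Sha" and T: "T \<in> carrier Sha"
  shows "Pe S \<star> Pe T = Pe (S \<star> Pe T) \<boxplus> Pe (Pe S \<star> T) \<boxplus> l \<cdot> Pe (S \<star> T) \<boxplus> k \<cdot> (S \<star> T)"
proof -
  have on_pure: "Pe S' \<star> Pe (pure w) =
      Pe (S' \<star> Pe (pure w)) \<boxplus> Pe (Pe S' \<star> pure w) \<boxplus> l \<cdot> Pe (S' \<star> pure w) \<boxplus> k \<cdot> (S' \<star> pure w)"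
    if "S' \<in> carrier Sha" "word_ok A w" for S' w
    by (rule sha_linear_eqI[OF Sha_module, where f = "\<lambda>S. Pe S \<star> Pe (pure w)"])
      (use that l_closed k_closed in \<open>(intro sha_linear_intros; simp)+, simp add: RB_pure, simp\<close>)
  show ?thesis
    by (rule sha_linear_eqI[OF Sha_module, where f = "\<lambda>T. Pe S \<star> Pe T"])
      (use S T l_closed k_closed in \<open>(intro sha_linear_intros; simp)+, simp add: on_pure, simp\<close>)
qed

section \<open>Associativity\<close>

text \<open>The summand \<open>k \<cdot> P\<^sub>e((X \<star> Y) \<star> Z)\<close> on the left avoids a subtraction: it is the
  difference between \<open>P\<^sub>e \<alpha> \<star> Z\<close> and \<open>(P\<^sub>e X \<star> P\<^sub>e Y) \<star> Z\<close> after applying \<open>P\<^sub>e\<close>.\<close>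

lemma Sha_RB_triple_left:
  assumes X: "X \<in> carrier Sha" and Y: "Y \<in> carrier Sha" and Z: "Z \<in> carrier Sha"
  defines "\<alpha> \<equiv> X \<star> Pe Y \<boxplus> Pe X \<star> Y \<boxplus> l \<cdot> (X \<star> Y)"
  shows "(Pe X \<star> Pe Y) \<star> Pe Z \<boxplus> k \<cdot> Pe ((X \<star> Y) \<star> Z) =
    Pe (\<alpha> \<star> Pe Z \<boxplus> (Pe X \<star> Pe Y) \<star> Z \<boxplus> l \<cdot> (\<alpha> \<star> Z)) \<boxplus> k \<cdot> (\<alpha> \<star> Z) \<boxplus> k \<cdot> ((X \<star> Y) \<star> Pe Z)"
proof -
  have \<alpha>: "\<alpha> \<in> carrier Sha" using X Y l_closed by (simp add: \<alpha>_def)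
  have XY: "Pe X \<star> Pe Y = Pe \<alpha> \<boxplus> k \<cdot> (X \<star> Y)"
    using Sha_RB[OF X Y] X Y l_closed by (simp add: \<alpha>_def Pe_add Pe_smult)
  have \<alpha>Z: "Pe \<alpha> \<star> Pe Z = Pe (\<alpha> \<star> Pe Z \<boxplus> Pe \<alpha> \<star> Z \<boxplus> l \<cdot> (\<alpha> \<star> Z)) \<boxplus> k \<cdot> (\<alpha> \<star> Z)"
    using Sha_RB[OF \<alpha> Z] \<alpha> Z l_closed by (simp add: Pe_add Pe_smult)
  have "Pe (\<alpha> \<star> Pe Z \<boxplus> (Pe X \<star> Pe Y) \<star> Z \<boxplus> l \<cdot> (\<alpha> \<star> Z)) =
      Pe (\<alpha> \<star> Pe Z \<boxplus> Pe \<alpha> \<star> Z \<boxplus> l \<cdot> (\<alpha> \<star> Z)) \<boxplus> k \<cdot> Pe ((X \<star> Y) \<star> Z)"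
    using X Y Z \<alpha> l_closed k_closed
    by (simp add: XY Sha_l_distr Sha_smult_mult_left Pe_add Pe_smult S.a_ac)
  moreover have "(Pe X \<star> Pe Y) \<star> Pe Z = Pe \<alpha> \<star> Pe Z \<boxplus> k \<cdot> ((X \<star> Y) \<star> Pe Z)"
    using X Y Z \<alpha> k_closed by (simp add: XY Sha_l_distr Sha_smult_mult_left)
  ultimately show ?thesis
    using X Y Z \<alpha> l_closed k_closed by (simp add: \<alpha>Z S.a_ac)
qed

lemma Sha_RB_triple_right:
  assumes X: "X \<in> carrier Sha" and Y: "Y \<in> carrier Sha" and Z: "Z \<in> carrier Sha"
  defines "\<beta> \<equiv> Y \<star> Pe Z \<boxplus> Pe Y \<star> Z \<boxplus> l \<cdot> (Y \<star> Z)"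
  shows "Pe X \<star> (Pe Y \<star> Pe Z) \<boxplus> k \<cdot> Pe (X \<star> (Y \<star> Z)) =
    Pe (Pe X \<star> \<beta> \<boxplus> X \<star> (Pe Y \<star> Pe Z) \<boxplus> l \<cdot> (X \<star> \<beta>)) \<boxplus> k \<cdot> (X \<star> \<beta>) \<boxplus> k \<cdot> (Pe X \<star> (Y \<star> Z))"
proof -
  have "Z \<star> Pe Y \<boxplus> Pe Z \<star> Y \<boxplus> l \<cdot> (Z \<star> Y) = \<beta>"
    using Y Z l_closed by (simp add: \<beta>_def Sha_mult_commute[of Z] Sha_mult_commute[of "Pe Z"] S.a_comm)
  with Sha_RB_triple_left[OF Z Y X] X Y Z l_closed k_closed show ?thesis
    unfolding \<beta>_def by (simp add: Sha_mult_commute[of _ X] Sha_mult_commute[of _ "Pe X"]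
        Sha_mult_commute[of "Pe Z"] Sha_mult_commute[of Z])
qed

lemma Sha_assoc_Pe:
  assumes X: "X \<in> carrier Sha" and Y: "Y \<in> carrier Sha" and Z: "Z \<in> carrier Sha"
    and assoc: "(X \<star> Pe Y) \<star> Pe Z = X \<star> (Pe Y \<star> Pe Z)" "(Pe X \<star> Y) \<star> Pe Z = Pe X \<star> (Y \<star> Pe Z)"
      "(X \<star> Y) \<star> Pe Z = X \<star> (Y \<star> Pe Z)" "(Pe X \<star> Pe Y) \<star> Z = Pe X \<star> (Pe Y \<star> Z)"
      "(X \<star> Y) \<star> Z = X \<star> (Y \<star> Z)" "(X \<star> Pe Y) \<star> Z = X \<star> (Pe Y \<star> Z)"
      "(Pe X \<star> Y) \<star> Z = Pe X \<star> (Y \<star> Z)"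
  shows "(Pe X \<star> Pe Y) \<star> Pe Z = Pe X \<star> (Pe Y \<star> Pe Z)"
proof -
  have "(Pe X \<star> Pe Y) \<star> Pe Z \<boxplus> k \<cdot> Pe ((X \<star> Y) \<star> Z) =
      Pe X \<star> (Pe Y \<star> Pe Z) \<boxplus> k \<cdot> Pe (X \<star> (Y \<star> Z))"
    unfolding Sha_RB_triple_left[OF X Y Z] Sha_RB_triple_right[OF X Y Z]
    using X Y Z l_closed k_closed
    by (simp add: Sha_l_distr Sha_r_distr Sha_smult_mult_left Sha_smult_mult_right S.smult_r_distr
        assoc S.a_ac)
  then show ?thesis
    using X Y Z k_closed assoc(5) by simp
qed

lemma Sha_assoc_pure:
  assumes "word_ok A x" "word_ok A y" "word_ok A z"
  shows "(pure x \<star> pure y) \<star> pure z = pure x \<star> (pure y \<star> pure z)"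
  using assms
proof (induction "length x + length y + length z" arbitrary: x y z rule: less_induct)
  case less
  obtain a x' where x: "x = a # x'" "a \<in> carrier A" "set x' \<subseteq> carrier A"
    using less.prems(1) by (rule word_okE)
  obtain b y' where y: "y = b # y'" "b \<in> carrier A" "set y' \<subseteq> carrier A"
    using less.prems(2) by (rule word_okE)
  obtain c z' where z: "z = c # z'" "c \<in> carrier A" "set z' \<subseteq> carrier A"
    using less.prems(3) by (rule word_okE)
  define tail where "tail w = (if w = [] then \<one>\<^bsub>Sha\<^esub> else Pe (pure w))" for w
  have tail_closed: "tail w \<in> carrier Sha" if "set w \<subseteq> carrier A" for w
    using that by (simp add: tail_def word_ok_def)
  have tail_Nil: "tail [] = \<one>\<^bsub>Sha\<^esub>" by (simp add: tail_def)
  have "(tail x' \<star> tail y') \<star> tail z' = tail x' \<star> (tail y' \<star> tail z')"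
  proof (cases "x' = [] \<or> y' = [] \<or> z' = []")
    case True
    with x y z tail_closed show ?thesis
      by (elim disjE) (simp_all add: tail_Nil Sha_one_mult Sha_mult_one)
  next
    case False
    have IH: "(pure p \<star> pure q) \<star> pure r = pure p \<star> (pure q \<star> pure r)"
      if "p \<in> {x', \<one>\<^bsub>A\<^esub> # x'}" "q \<in> {y', \<one>\<^bsub>A\<^esub> # y'}" "r \<in> {z', \<one>\<^bsub>A\<^esub> # z'}"
        "length p + length q + length r < length x + length y + length z" for p q r
      using that False x y z by (intro less.hyps) (auto simp: word_ok_def)
    from False x y z
    have "(Pe (pure x') \<star> Pe (pure y')) \<star> Pe (pure z') = Pe (pure x') \<star> (Pe (pure y') \<star> Pe (pure z'))"
      by (intro Sha_assoc_Pe) (simp_all add: Pe_pure IH word_ok_def)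
    with False show ?thesis
      unfolding tail_def by simp
  qed
  with x y z tail_closed show ?case
    by (simp add: pure_eq_mul_first[folded tail_def] mul_first_mult_left mul_first_mult_right)
qed

lemma Sha_assoc:
  assumes S: "S \<in> carrier Sha" and T: "T \<in> carrier Sha" and U: "U \<in> carrier Sha"
  shows "(S \<star> T) \<star> U = S \<star> (T \<star> U)"
proof -
  have pure2: "(S' \<star> pure y) \<star> pure z = S' \<star> (pure y \<star> pure z)"
    if "S' \<in> carrier Sha" "word_ok A y" "word_ok A z" for S' y z
    by (rule sha_linear_eqI[OF Sha_module, where f = "\<lambda>S. (S \<star> pure y) \<star> pure z"])
      (use that in \<open>(intro sha_linear_intros; simp)+, simp add: Sha_assoc_pure, simp\<close>)
  have pure1: "(S \<star> T') \<star> pure z = S \<star> (T' \<star> pure z)" if "T' \<in> carrier Sha" "word_ok A z" for T' z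
    by (rule sha_linear_eqI[OF Sha_module, where f = "\<lambda>T. (S \<star> T) \<star> pure z"])
      (use that S in \<open>(intro sha_linear_intros; simp)+, simp add: pure2, simp\<close>)
  show ?thesis
    by (rule sha_linear_eqI[OF Sha_module, where f = "\<lambda>U. (S \<star> T) \<star> U"])
      (use S T U in \<open>(intro sha_linear_intros; simp)+, simp add: pure1, simp\<close>)
qed

lemma Sha_cring: "cring Sha"
proof (rule cringI)
  show "comm_monoid Sha"
  proof (rule comm_monoidI)
    fix S T U assume "S \<in> carrier Sha" "T \<in> carrier Sha" "U \<in> carrier Sha"
    then show "S \<star> T \<star> U = S \<star> (T \<star> U)" by (rule Sha_assoc)
  next
    fix S T assume "S \<in> carrier Sha" "T \<in> carrier Sha"
    then show "S \<star> T = T \<star> S" by (rule Sha_mult_commute)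
  qed (simp_all add: Sha_one_mult)
qed (simp_all add: Sha_abelian_group Sha_l_distr)

lemma Sha_algebra: "algebra K Sha"
  by (rule algebraI)
    (auto simp: R.is_cring Sha_cring S.smult_l_distr S.smult_r_distr S.smult_assoc1 Sha_smult_mult_left)

lemma P_e_ext_RB_operator: "ext_RB_operator K Sha l k Pe"
  unfolding ext_RB_operator_def by (auto simp: Pe_add Pe_smult Sha_RB)

lemma j_A_alg_hom: "j_A K A \<in> alg_hom K A Sha"
proof -
  have j_A: "j_A K A a = pure [a]" for a
    by (simp add: j_A_def pure_def)
  have add: "pure [a \<oplus>\<^bsub>A\<^esub> b] = pure [a] \<boxplus> pure [b]" if "a \<in> carrier A" "b \<in> carrier A" for a b
    using teq.lin_add[of "\<one>\<^bsub>K\<^esub>" K "[]" A "[]" a b] that by (simp add: pure_def Sha_add_cls cls_eqI)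
  have smult: "pure [c \<odot>\<^bsub>A\<^esub> a] = c \<cdot> pure [a]" if "c \<in> carrier K" "a \<in> carrier A" for c a
    using teq.lin_smult[of "\<one>\<^bsub>K\<^esub>" K c "[]" A "[]" a] that by (simp add: pure_def Sha_smult_cls cls_eqI)
  have mult: "pure [a \<otimes>\<^bsub>A\<^esub> b] = pure [a] \<star> pure [b]" if "a \<in> carrier A" "b \<in> carrier A" for a b
    using that pure_single_mult[of a "pure [b]"] by (simp add: pure_def mul_first_cls)
  show ?thesis
    unfolding alg_hom_def by (auto simp: j_A ring_hom_def add smult mult pure_one)
qed

end

section \<open>The universal property\<close>

locale ext_shuffle_lift = ext_shuffle K A l k + T: algebra K R
  for K :: "'k ring" and A :: "('k,'a) module" and l k :: 'k and R :: "('k,'r) module" +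
  fixes P :: "'r \<Rightarrow> 'r" and f :: "'a \<Rightarrow> 'r"
  assumes P_ext_RB: "ext_RB_operator K R l k P" and f_alg_hom: "f \<in> alg_hom K A R"
begin

lemma P_closed [simp]: "x \<in> carrier R \<Longrightarrow> P x \<in> carrier R"
  and P_add: "x \<in> carrier R \<Longrightarrow> y \<in> carrier R \<Longrightarrow> P (x \<oplus>\<^bsub>R\<^esub> y) = P x \<oplus>\<^bsub>R\<^esub> P y"
  and P_smult: "c \<in> carrier K \<Longrightarrow> x \<in> carrier R \<Longrightarrow> P (c \<odot>\<^bsub>R\<^esub> x) = c \<odot>\<^bsub>R\<^esub> P x"
  and P_RB: "x \<in> carrier R \<Longrightarrow> y \<in> carrier R \<Longrightarrow>
    P x \<otimes>\<^bsub>R\<^esub> P y = P (x \<otimes>\<^bsub>R\<^esub> P y) \<oplus>\<^bsub>R\<^esub> P (P x \<otimes>\<^bsub>R\<^esub> y)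
      \<oplus>\<^bsub>R\<^esub> l \<odot>\<^bsub>R\<^esub> P (x \<otimes>\<^bsub>R\<^esub> y) \<oplus>\<^bsub>R\<^esub> k \<odot>\<^bsub>R\<^esub> (x \<otimes>\<^bsub>R\<^esub> y)"
  using P_ext_RB unfolding ext_RB_operator_def by auto

lemma P_zero: "P \<zero>\<^bsub>R\<^esub> = \<zero>\<^bsub>R\<^esub>"
  using P_smult[of "\<zero>\<^bsub>K\<^esub>" "\<zero>\<^bsub>R\<^esub>"] by simp

lemma f_closed [simp]: "a \<in> carrier A \<Longrightarrow> f a \<in> carrier R"
  and f_add: "a \<in> carrier A \<Longrightarrow> b \<in> carrier A \<Longrightarrow> f (a \<oplus>\<^bsub>A\<^esub> b) = f a \<oplus>\<^bsub>R\<^esub> f b"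
  and f_mult: "a \<in> carrier A \<Longrightarrow> b \<in> carrier A \<Longrightarrow> f (a \<otimes>\<^bsub>A\<^esub> b) = f a \<otimes>\<^bsub>R\<^esub> f b"
  and f_one: "f \<one>\<^bsub>A\<^esub> = \<one>\<^bsub>R\<^esub>"
  and f_smult: "c \<in> carrier K \<Longrightarrow> a \<in> carrier A \<Longrightarrow> f (c \<odot>\<^bsub>A\<^esub> a) = c \<odot>\<^bsub>R\<^esub> f a"
  using f_alg_hom by (auto simp: alg_hom_def ring_hom_def)

fun ev_word :: "'a list \<Rightarrow> 'r" where
  "ev_word [] = \<zero>\<^bsub>R\<^esub>"
| "ev_word [a] = f a"
| "ev_word (a # b # w) = f a \<otimes>\<^bsub>R\<^esub> P (ev_word (b # w))"

lemma ev_word_closed [simp]: "set w \<subseteq> carrier A \<Longrightarrow> ev_word w \<in> carrier R"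
  by (induction w rule: ev_word.induct) auto

lemma ev_word_Cons: "w \<noteq> [] \<Longrightarrow> ev_word (a # w) = f a \<otimes>\<^bsub>R\<^esub> P (ev_word w)"
  by (cases w) auto

lemma ev_word_add_letter:
  "set u \<subseteq> carrier A \<Longrightarrow> set v \<subseteq> carrier A \<Longrightarrow> a \<in> carrier A \<Longrightarrow> b \<in> carrier A \<Longrightarrow>
   ev_word (u @ (a \<oplus>\<^bsub>A\<^esub> b) # v) = ev_word (u @ a # v) \<oplus>\<^bsub>R\<^esub> ev_word (u @ b # v)"
proof (induction u)
  case Nil
  then show ?case by (cases "v = []") (auto simp: ev_word_Cons f_add T.l_distr)
next
  case (Cons u0 u)
  then show ?case by (simp add: ev_word_Cons P_add T.r_distr)
qed

lemma ev_word_smult_letter: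
  "set u \<subseteq> carrier A \<Longrightarrow> set v \<subseteq> carrier A \<Longrightarrow> a \<in> carrier A \<Longrightarrow> d \<in> carrier K \<Longrightarrow>
   ev_word (u @ (d \<odot>\<^bsub>A\<^esub> a) # v) = d \<odot>\<^bsub>R\<^esub> ev_word (u @ a # v)"
proof (induction u)
  case Nil
  then show ?case by (cases "v = []") (auto simp: ev_word_Cons f_smult T.smult_assoc2)
next
  case (Cons u0 u)
  then show ?case by (simp add: ev_word_Cons P_smult T.smult_assoc2_right)
qed

definition ev_fsum :: "('k \<times> 'a list) list \<Rightarrow> 'r" where
  "ev_fsum X = foldr (\<lambda>(c,w) acc. c \<odot>\<^bsub>R\<^esub> ev_word w \<oplus>\<^bsub>R\<^esub> acc) X \<zero>\<^bsub>R\<^esub>"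

lemma ev_fsum_Nil [simp]: "ev_fsum [] = \<zero>\<^bsub>R\<^esub>"
  by (simp add: ev_fsum_def)

lemma ev_fsum_Cons [simp]: "ev_fsum ((c,w) # X) = c \<odot>\<^bsub>R\<^esub> ev_word w \<oplus>\<^bsub>R\<^esub> ev_fsum X"
  by (simp add: ev_fsum_def)

lemma ev_fsum_closed [simp]: "is_fsum X \<Longrightarrow> ev_fsum X \<in> carrier R"
  by (induction X) (auto simp: word_ok_def)

lemma ev_fsum_append [simp]: "is_fsum X \<Longrightarrow> is_fsum Y \<Longrightarrow> ev_fsum (X @ Y) = ev_fsum X \<oplus>\<^bsub>R\<^esub> ev_fsum Y"
  by (induction X) (auto simp: word_ok_def T.a_ac)

lemma ev_fsum_smult: "e \<in> carrier K \<Longrightarrow> is_fsum X \<Longrightarrow> ev_fsum (fs_smult K e X) = e \<odot>\<^bsub>R\<^esub> ev_fsum X"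
  by (induction X) (auto simp: word_ok_def T.smult_r_distr T.smult_assoc1)

lemma ev_fsum_teq: "X \<approx> Y \<Longrightarrow> ev_fsum X = ev_fsum Y"
proof (induction rule: teq.induct)
  case (app X X' Y)
  then show ?case using teq_is_fsum[OF app.hyps(1)] by simp
next
  case (scal X Y e)
  then show ?case using teq_is_fsum[OF scal.hyps(1)] by (simp add: ev_fsum_smult)
next
  case (coeff_add c d w)
  then show ?case by (simp add: word_ok_def T.smult_l_distr T.a_ac)
next
  case (lin_add c u v a b)
  then show ?case by (simp add: ev_word_add_letter T.smult_r_distr T.a_ac)
next
  case (lin_smult c d u v a)
  then show ?case by (simp add: ev_word_smult_letter T.smult_assoc1)
qed (auto simp: T.a_comm word_ok_def)

lemma ev_fsum_fs_pre: "c \<in> carrier A \<Longrightarrow> is_fsum X \<Longrightarrow> ev_fsum (fs_pre c X) = f c \<otimes>\<^bsub>R\<^esub> P (ev_fsum X)"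
proof (induction X)
  case Nil
  then show ?case by (simp add: P_zero)
next
  case (Cons x X)
  obtain d w where x: "x = (d,w)" by force
  with Cons.prems have "d \<in> carrier K" "w \<noteq> []" "set w \<subseteq> carrier A" "is_fsum X"
    by (auto simp: word_ok_def)
  with Cons x show ?case by (simp add: ev_word_Cons P_add P_smult T.r_distr T.smult_assoc2_right)
qed

lemma ev_fsum_fs_mulfirst:
  assumes "is_fsum X" "c \<in> carrier A"
  shows "ev_fsum (fs_mulfirst A c X) = f c \<otimes>\<^bsub>R\<^esub> ev_fsum X"
  using assms
proof (induction X rule: fsum_induct)
  case (Cons d a w X)
  then have "ev_word ((c \<otimes>\<^bsub>A\<^esub> a) # w) = f c \<otimes>\<^bsub>R\<^esub> ev_word (a # w)"
    by (cases "w = []") (auto simp: ev_word_Cons f_mult T.m_assoc)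
  with Cons show ?case by (simp add: T.r_distr T.smult_assoc2_right)
qed simp

lemma ev_fsum_dia: "word_ok A v \<Longrightarrow> word_ok A w \<Longrightarrow> ev_fsum (v \<diamond> w) = ev_word v \<otimes>\<^bsub>R\<^esub> ev_word w"
proof (induction v w rule: dia_induct)
  case (single a b)
  then show ?case by (simp add: f_mult)
next
  case (single_left a b b1 bs)
  then show ?case by (simp add: f_mult T.m_assoc)
next
  case (single_right a a1 as b)
  then show ?case by (simp add: f_mult T.m_assoc T.m_comm T.m_lcomm)
next
  case (Cons_Cons a a1 as b b1 bs)
  let ?x = "ev_word (a1 # as)" and ?y = "ev_word (b1 # bs)"
  have words: "word_ok A (a1 # as)" "word_ok A (b1 # bs)" "word_ok A (\<one>\<^bsub>A\<^esub> # a1 # as)"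
    "word_ok A (\<one>\<^bsub>A\<^esub> # b1 # bs)" "a \<in> carrier A" "b \<in> carrier A"
    using Cons_Cons.prems by auto
  then have xy: "?x \<in> carrier R" "?y \<in> carrier R" by (auto simp: word_ok_def)
  have IH: "ev_fsum ((a1 # as) \<diamond> (\<one>\<^bsub>A\<^esub> # b1 # bs)) = ?x \<otimes>\<^bsub>R\<^esub> P ?y"
           "ev_fsum ((\<one>\<^bsub>A\<^esub> # a1 # as) \<diamond> (b1 # bs)) = P ?x \<otimes>\<^bsub>R\<^esub> ?y"
           "ev_fsum ((a1 # as) \<diamond> (b1 # bs)) = ?x \<otimes>\<^bsub>R\<^esub> ?y"
    using Cons_Cons words xy by (auto simp: f_one)
  have "ev_fsum ((a # a1 # as) \<diamond> (b # b1 # bs)) =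
      f (a \<otimes>\<^bsub>A\<^esub> b) \<otimes>\<^bsub>R\<^esub> P (?x \<otimes>\<^bsub>R\<^esub> P ?y) \<oplus>\<^bsub>R\<^esub> (f (a \<otimes>\<^bsub>A\<^esub> b) \<otimes>\<^bsub>R\<^esub> P (P ?x \<otimes>\<^bsub>R\<^esub> ?y) \<oplus>\<^bsub>R\<^esub>
        (f (a \<otimes>\<^bsub>A\<^esub> b) \<otimes>\<^bsub>R\<^esub> P (l \<odot>\<^bsub>R\<^esub> (?x \<otimes>\<^bsub>R\<^esub> ?y)) \<oplus>\<^bsub>R\<^esub>
         k \<odot>\<^bsub>R\<^esub> (f (a \<otimes>\<^bsub>A\<^esub> b) \<otimes>\<^bsub>R\<^esub> (?x \<otimes>\<^bsub>R\<^esub> ?y))))"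
    using words l_closed k_closed IH
    by (simp add: dia_Cons_Cons dia_step_def is_fsum_dia ev_fsum_fs_pre ev_fsum_fs_mulfirst
        ev_fsum_smult del: dia.simps ev_word.simps(3))
  also have "\<dots> = (f a \<otimes>\<^bsub>R\<^esub> f b) \<otimes>\<^bsub>R\<^esub> (P ?x \<otimes>\<^bsub>R\<^esub> P ?y)"
    using xy words l_closed k_closed
    by (simp add: P_RB f_mult P_add P_smult T.r_distr T.smult_assoc2_right T.a_ac)
  also have "\<dots> = ev_word (a # a1 # as) \<otimes>\<^bsub>R\<^esub> ev_word (b # b1 # bs)"
    using xy words by (simp add: T.m_ac)
  finally show ?case .
qed (simp_all add: word_ok_def)

lemma ev_fsum_fmult: "is_fsum X \<Longrightarrow> is_fsum Y \<Longrightarrow> ev_fsum (fmult X Y) = ev_fsum X \<otimes>\<^bsub>R\<^esub> ev_fsum Y"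
proof (induction X)
  case (Cons x X)
  obtain c v where x: "x = (c,v)" by force
  with Cons.prems have cv: "c \<in> carrier K" "word_ok A v" "is_fsum X" by auto
  then have v: "ev_word v \<in> carrier R" by (simp add: word_ok_def)
  have "ev_fsum (fmult_term c v Y) = c \<odot>\<^bsub>R\<^esub> (ev_word v \<otimes>\<^bsub>R\<^esub> ev_fsum Y)"
    using \<open>is_fsum Y\<close>
  proof (induction Y)
    case (Cons y Y)
    obtain d w where y: "y = (d,w)" by force
    with Cons.prems have "d \<in> carrier K" "word_ok A w" "is_fsum Y" by auto
    with Cons.IH y cv v show ?case
      by (simp add: is_fsum_dia ev_fsum_smult ev_fsum_dia T.r_distr T.smult_assoc2_right
          T.smult_r_distr T.smult_assoc1 word_ok_def)
  qed (use cv v in simp)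
  with Cons x cv v show ?case by (simp add: T.l_distr T.smult_assoc2)
qed simp

definition lift :: "('k \<times> 'a list) list set \<Rightarrow> 'r" where
  "lift S = ev_fsum (trep S)"

lemma lift_cls: "is_fsum X \<Longrightarrow> lift (cls X) = ev_fsum X"
  unfolding lift_def by (rule ev_fsum_teq, rule trep_cls)

lemma lift_ext_RB_hom: "lift \<in> ext_RB_hom K Sha Pe R P"
  unfolding ext_RB_hom_def alg_hom_def ring_hom_def
  by (auto elim!: carrier_ShaE simp: lift_cls Sha_mult_cls Sha_add_cls Sha_smult_cls Sha_one P_e_cls
      ev_fsum_fmult ev_fsum_smult ev_fsum_fs_pre f_one)

lemma lift_j_A: "a \<in> carrier A \<Longrightarrow> lift (j_A K A a) = f a"
  by (simp add: j_A_def lift_cls)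

lemma ext_RB_hom_pure:
  assumes h: "h \<in> ext_RB_hom K Sha Pe R P" and h_j_A: "\<forall>a\<in>carrier A. h (j_A K A a) = f a"
    and w: "word_ok A w"
  shows "h (pure w) = ev_word w"
  using w
proof (induction w rule: ev_word.induct)
  case (2 a)
  then show ?case using h_j_A by (simp add: j_A_def pure_def)
next
  case (3 a b w)
  then have "pure (a # b # w) = pure [a] \<star> Pe (pure (b # w))"
    by (simp add: pure_Cons pure_single_mult)
  with 3 h h_j_A show ?case
    by (simp add: ext_RB_hom_def alg_hom_def ring_hom_def j_A_def pure_def[of "[_]"])
qed (simp add: word_ok_def)

lemma sha_linear_ext_RB_hom: "h \<in> ext_RB_hom K Sha Pe R P \<Longrightarrow> sha_linear R h"
  by (auto simp: sha_linear_def ext_RB_hom_def alg_hom_def ring_hom_def)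

lemma lift_unique:
  assumes "h \<in> ext_RB_hom K Sha Pe R P" and "\<forall>a\<in>carrier A. h (j_A K A a) = f a"
    and "S \<in> carrier Sha"
  shows "h S = lift S"
proof (rule sha_linear_eqI[OF T.module])
  show "sha_linear R h" "sha_linear R lift"
    using assms(1) lift_ext_RB_hom by (simp_all add: sha_linear_ext_RB_hom)
  show "h (pure w) = lift (pure w)" if "word_ok A w" for w
    using ext_RB_hom_pure[OF assms(1,2) that] ext_RB_hom_pure[OF lift_ext_RB_hom _ that] lift_j_A
    by simp
qed (rule assms(3))

end

lemma (in ext_shuffle) Sha_universal:
  fixes R :: "('k,'r) module"
  assumes "comm_ext_RB_algebra K R l k P" and "f \<in> alg_hom K A R"
  shows "\<exists>g \<in> ext_RB_hom K Sha Pe R P. (\<forall>a\<in>carrier A. g (j_A K A a) = f a) \<and>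
    (\<forall>h \<in> ext_RB_hom K Sha Pe R P. (\<forall>a\<in>carrier A. h (j_A K A a) = f a) \<longrightarrow>
       (\<forall>S\<in>carrier Sha. h S = g S))"
proof -
  interpret T: algebra K R
    using assms(1) by (simp add: comm_ext_RB_algebra_def)
  interpret ext_shuffle_lift K A l k R P f
    by unfold_locales (use assms in \<open>simp_all add: comm_ext_RB_algebra_def\<close>)
  show ?thesis using lift_ext_RB_hom lift_j_A lift_unique by blast
qed

theorem theorem3p3:
  fixes K :: "'k ring" and A :: "('k,'a) module" and l k :: 'k
  assumes "cring K" and "algebra K A" and "l \<in> carrier K" and "k \<in> carrier K"
  shows "comm_ext_RB_algebra K (Sha_e K A l k) l k (P_e K A)
    \<and> j_A K A \<in> alg_hom K A (Sha_e K A l k)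
    \<and> (\<forall>(R :: ('k,'r) module) P f.
         comm_ext_RB_algebra K R l k P \<longrightarrow> f \<in> alg_hom K A R \<longrightarrow>
         (\<exists>g \<in> ext_RB_hom K (Sha_e K A l k) (P_e K A) R P.
            (\<forall>a\<in>carrier A. g (j_A K A a) = f a) \<and>
            (\<forall>h \<in> ext_RB_hom K (Sha_e K A l k) (P_e K A) R P.
               (\<forall>a\<in>carrier A. h (j_A K A a) = f a) \<longrightarrow>
               (\<forall>x\<in>carrier (Sha_e K A l k). h x = g x))))"
proof -
  interpret ext_shuffle K A l k
    using assms by (simp add: ext_shuffle_def ext_shuffle_axioms_def tensor_sums_def)
  show ?thesis
    using Sha_algebra P_e_ext_RB_operator j_A_alg_hom Sha_universal
    unfolding comm_ext_RB_algebra_def by blast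
qed

end
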